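(* For a space $X$ and an infinite set $\mathcal{A}$, the following are equivalent: (i) Each convex-valued l.s.c. mapping $\Phi:X\rightrightarrows\mathbf{c}_{00}(\mathcal{A})$ has, for every $\varepsilon>0$, a continuous $\varepsilon$-selection. (ii) Each convex-valued l.s.c. mapping $\Phi:X\rightrightarrows\ell_1(\mathcal{A})$ has, for every $\varepsilon>0$, a continuous $\varepsilon$-selection. (iii) Each open cover $\{U_\alpha:\alpha\in\mathcal{A}\}$ of $X$ indexed by $\mathcal{A}$ has an index-subordinated partition of unity.
   Context: $\ell_1(\mathcal{A})$ is the Banach space of $y:\mathcal{A}\to\mathbb{R}$ with $\|y\|_1=\sum_\alpha|y(\alpha)|<\infty$; $\mathbf{c}_{00}(\mathcal{A})$ is its (normed, non-complete) subspace of finitely supported functions with the $\|\cdot\|_1$ norm. A set-valued mapping $\Phi:X\rightrightarrows Y$ assigns nonempty subsets; it is l.s.c. if $\{x:\Phi(x)\cap U\ne\emptyset\}$ is open for every open $U\subseteq Y$, and convex-valued if every $\Phi(x)$ is convex. For a metric space $(Y,d)$, a map $f:X\to Y$ is an $\varepsilon$-selection for $\Phi$ if for every $x$ there is $y\in\Phi(x)$ with $d(f(x),y)<\varepsilon$. A partition of unity indexed by $\mathcal{A}$ is a family of continuous $\xi_\alpha:X\to[0,1]$ with $\sum_\alpha\xi_\alpha(x)=1$ for all $x$; it is index-subordinated to $\{U_\alpha\}$ if $\{x:\xi_\alpha(x)\neq0\}\subseteq U_\alpha$ for all $\alpha$. *)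

theory Defs
  imports "HOL-Analysis.Analysis"
begin

text \<open>Elements of l1(A) / c00(A) are modelled as functions 'a => real, the index set A
being the (infinite) type 'a.\<close>

definition l1norm :: "('a \<Rightarrow> real) \<Rightarrow> real" where
  "l1norm y = (\<Sum>\<^sub>\<infinity>a. \<bar>y a\<bar>)"

definition l1dist :: "('a \<Rightarrow> real) \<Rightarrow> ('a \<Rightarrow> real) \<Rightarrow> real" where
  "l1dist y z = l1norm (\<lambda>a. y a - z a)"

definition ell1 :: "('a \<Rightarrow> real) set" where
  "ell1 = {y. (\<lambda>a. \<bar>y a\<bar>) summable_on UNIV}"

definition c00 :: "('a \<Rightarrow> real) set" where
  "c00 = {y. finite {a. y a \<noteq> 0}}"

definition l1top :: "('a \<Rightarrow> real) set \<Rightarrow> ('a \<Rightarrow> real) topology" where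
  "l1top Y = Metric_space.mtopology Y l1dist"

definition convex_fun_set :: "('a \<Rightarrow> real) set \<Rightarrow> bool" where
  "convex_fun_set S \<longleftrightarrow>
     (\<forall>y\<in>S. \<forall>z\<in>S. \<forall>t::real. 0 \<le> t \<and> t \<le> 1 \<longrightarrow> (\<lambda>a. t * y a + (1 - t) * z a) \<in> S)"

definition convex_lsc_mapping :: "('x::topological_space \<Rightarrow> ('a \<Rightarrow> real) set) \<Rightarrow> ('a \<Rightarrow> real) set \<Rightarrow> bool" where
  "convex_lsc_mapping \<Phi> Y \<longleftrightarrow>
     (\<forall>x. \<Phi> x \<noteq> {} \<and> \<Phi> x \<subseteq> Y \<and> convex_fun_set (\<Phi> x)) \<and>
     (\<forall>U. openin (l1top Y) U \<longrightarrow> open {x. \<Phi> x \<inter> U \<noteq> {}})"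

definition is_eps_selection :: "real \<Rightarrow> ('x \<Rightarrow> ('a \<Rightarrow> real) set) \<Rightarrow> ('x \<Rightarrow> ('a \<Rightarrow> real)) \<Rightarrow> bool" where
  "is_eps_selection \<epsilon> \<Phi> f \<longleftrightarrow> (\<forall>x. \<exists>y\<in>\<Phi> x. l1dist (f x) y < \<epsilon>)"

definition has_cont_eps_selections :: "('a \<Rightarrow> real) set \<Rightarrow> ('x::topological_space) itself \<Rightarrow> bool" where
  "has_cont_eps_selections Y _ \<longleftrightarrow>
     (\<forall>\<Phi> :: 'x \<Rightarrow> ('a \<Rightarrow> real) set. convex_lsc_mapping \<Phi> Y \<longrightarrow>
        (\<forall>\<epsilon>>0. \<exists>f. continuous_map euclidean (l1top Y) f \<and> is_eps_selection \<epsilon> \<Phi> f))"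

definition partition_of_unity :: "('a \<Rightarrow> 'x::topological_space \<Rightarrow> real) \<Rightarrow> bool" where
  "partition_of_unity \<xi> \<longleftrightarrow>
     (\<forall>a. continuous_on UNIV (\<xi> a) \<and> (\<forall>x. 0 \<le> \<xi> a x \<and> \<xi> a x \<le> 1)) \<and>
     (\<forall>x. ((\<lambda>a. \<xi> a x) has_sum 1) UNIV)"

definition index_subordinated :: "('a \<Rightarrow> 'x \<Rightarrow> real) \<Rightarrow> ('a \<Rightarrow> 'x set) \<Rightarrow> bool" where
  "index_subordinated \<xi> U \<longleftrightarrow> (\<forall>a. {x. \<xi> a x \<noteq> 0} \<subseteq> U a)"

end

theory Submission
  imports Defs "HOL-Library.Equipollence"
begin

(*
  (iii) implies the selection properties: given a convex-valued l.s.c. Phi and eps > 0, the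
  finitely supported vectors with rational entries form a dense subset of l1 that can be
  indexed by the infinite set A, say by d_alpha.  The sets U_alpha = {x. Phi x meets the
  eps-ball around d_alpha} are open and cover X.  A subordinated partition of unity is made
  locally finite by cutting it off at half its pointwise supremum and renormalising; then
  x |-> sum_alpha xi_alpha(x) d_alpha is continuous, finitely supported, and eps-close to a
  convex combination of points of Phi x.

  Conversely, for an open cover U the probability vectors supported on {alpha. x : U_alpha}
  form a convex-valued l.s.c. mapping into c00 (and into l1).  Michael's iteration -- a
  2^-(n+1)-selection of the mapping restricted to the 2^-n-ball around the previous
  selection -- yields continuous maps converging uniformly in l1; the coordinates of the
  limit form a partition of unity subordinated to U.
*)


section \<open>The l1 distance\<close>

lemma ell1_iff_bounded_sums:
  "y \<in> ell1 \<longleftrightarrow> (\<exists>B. \<forall>F. finite F \<longrightarrow> (\<Sum>a\<in>F. \<bar>y a\<bar>) \<le> B)"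
proof
  assume "y \<in> ell1"
  then have "(\<lambda>a. \<bar>y a\<bar>) summable_on UNIV" by (simp add: ell1_def)
  then show "\<exists>B. \<forall>F. finite F \<longrightarrow> (\<Sum>a\<in>F. \<bar>y a\<bar>) \<le> B"
    by (intro exI[of _ "infsum (\<lambda>a. \<bar>y a\<bar>) UNIV"] allI impI finite_sum_le_infsum) auto
next
  assume "\<exists>B. \<forall>F. finite F \<longrightarrow> (\<Sum>a\<in>F. \<bar>y a\<bar>) \<le> B"
  then obtain B where "\<And>F. finite F \<Longrightarrow> (\<Sum>a\<in>F. \<bar>y a\<bar>) \<le> B" by blast
  then have "(\<lambda>a. \<bar>y a\<bar>) summable_on UNIV"
    by (intro nonneg_bdd_above_summable_on) (auto intro!: bdd_aboveI[of _ B])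
  then show "y \<in> ell1" by (simp add: ell1_def)
qed

lemma l1norm_nonneg: "0 \<le> l1norm y"
  unfolding l1norm_def by (rule infsum_nonneg) auto

lemma sum_abs_le_l1norm: "y \<in> ell1 \<Longrightarrow> finite F \<Longrightarrow> (\<Sum>a\<in>F. \<bar>y a\<bar>) \<le> l1norm y"
  unfolding l1norm_def ell1_def by (intro finite_sum_le_infsum) auto

lemma abs_le_l1norm: "y \<in> ell1 \<Longrightarrow> \<bar>y a\<bar> \<le> l1norm y"
  using sum_abs_le_l1norm[of y "{a}"] by simp

lemma l1norm_le_bound:
  assumes "\<And>F. finite F \<Longrightarrow> (\<Sum>a\<in>F. \<bar>y a\<bar>) \<le> B"
  shows "l1norm y \<le> B"
proof -
  have "y \<in> ell1" using assms ell1_iff_bounded_sums by blast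
  then show ?thesis unfolding l1norm_def ell1_def
    by (intro infsum_le_finite_sums) (auto intro: assms)
qed

lemma ell1_add: "u \<in> ell1 \<Longrightarrow> v \<in> ell1 \<Longrightarrow> (\<lambda>a. u a + v a) \<in> ell1"
  unfolding ell1_def mem_Collect_eq
  by (rule summable_on_comparison_test[where f="\<lambda>a. \<bar>u a\<bar> + \<bar>v a\<bar>"])
    (auto intro: summable_on_add abs_triangle_ineq)

lemma l1norm_add_le:
  assumes "u \<in> ell1" "v \<in> ell1"
  shows "l1norm (\<lambda>a. u a + v a) \<le> l1norm u + l1norm v"
proof (rule l1norm_le_bound)
  fix F :: "'a set" assume "finite F"
  have "(\<Sum>a\<in>F. \<bar>u a + v a\<bar>) \<le> (\<Sum>a\<in>F. \<bar>u a\<bar>) + (\<Sum>a\<in>F. \<bar>v a\<bar>)"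
    by (simp add: sum.distrib[symmetric] sum_mono abs_triangle_ineq)
  also have "\<dots> \<le> l1norm u + l1norm v"
    using \<open>finite F\<close> assms by (intro add_mono sum_abs_le_l1norm)
  finally show "(\<Sum>a\<in>F. \<bar>u a + v a\<bar>) \<le> l1norm u + l1norm v" .
qed

lemma ell1_scale: "u \<in> ell1 \<Longrightarrow> (\<lambda>a. c * u a) \<in> ell1"
  unfolding ell1_def by (simp add: abs_mult summable_on_cmult_right)

lemma l1norm_scale: "u \<in> ell1 \<Longrightarrow> l1norm (\<lambda>a. c * u a) = \<bar>c\<bar> * l1norm u"
  unfolding l1norm_def ell1_def by (simp add: abs_mult infsum_cmult_right)

lemma ell1_diff: "u \<in> ell1 \<Longrightarrow> v \<in> ell1 \<Longrightarrow> (\<lambda>a. u a - v a) \<in> ell1"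
  using ell1_add[of u "\<lambda>a. -1 * v a"] ell1_scale[of v "-1"] by simp

lemma ell1_sum:
  "finite I \<Longrightarrow> (\<And>i. i \<in> I \<Longrightarrow> u i \<in> ell1) \<Longrightarrow> (\<lambda>b. \<Sum>i\<in>I. u i b) \<in> ell1"
proof (induction I rule: finite_induct)
  case empty
  then show ?case by (simp add: ell1_def)
next
  case (insert j I)
  then show ?case by (simp add: ell1_add)
qed

lemma l1norm_sum_le:
  "finite I \<Longrightarrow> (\<And>i. i \<in> I \<Longrightarrow> u i \<in> ell1) \<Longrightarrow>
    l1norm (\<lambda>b. \<Sum>i\<in>I. u i b) \<le> (\<Sum>i\<in>I. l1norm (u i))"
proof (induction I rule: finite_induct)
  case empty
  then show ?case by (simp add: l1norm_def)
next
  case (insert j I)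
  then have "l1norm (\<lambda>b. \<Sum>i\<in>insert j I. u i b) \<le> l1norm (u j) + l1norm (\<lambda>b. \<Sum>i\<in>I. u i b)"
    using l1norm_add_le[of "u j" "\<lambda>b. \<Sum>i\<in>I. u i b"] by (simp add: ell1_sum)
  with insert show ?case by simp
qed

lemma l1norm_weighted_sum_le:
  "finite I \<Longrightarrow> (\<And>i. i \<in> I \<Longrightarrow> u i \<in> ell1) \<Longrightarrow>
    l1norm (\<lambda>b. \<Sum>i\<in>I. c i * u i b) \<le> (\<Sum>i\<in>I. \<bar>c i\<bar> * l1norm (u i))"
  using l1norm_sum_le[of I "\<lambda>i b. c i * u i b"] by (simp add: ell1_scale l1norm_scale)

lemma c00_subset_ell1: "c00 \<subseteq> ell1"
proof
  fix y :: "'a \<Rightarrow> real" assume "y \<in> c00"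
  then have fin: "finite {a. y a \<noteq> 0}" by (simp add: c00_def)
  have "(\<Sum>a\<in>F. \<bar>y a\<bar>) \<le> (\<Sum>a\<in>{a. y a \<noteq> 0}. \<bar>y a\<bar>)" if "finite F" for F
  proof -
    have "(\<Sum>a\<in>F. \<bar>y a\<bar>) = (\<Sum>a\<in>F \<inter> {a. y a \<noteq> 0}. \<bar>y a\<bar>)"
      using that by (intro sum.mono_neutral_right) auto
    also have "\<dots> \<le> (\<Sum>a\<in>{a. y a \<noteq> 0}. \<bar>y a\<bar>)" using fin by (intro sum_mono2) auto
    finally show ?thesis .
  qed
  then show "y \<in> ell1" using ell1_iff_bounded_sums by blast
qed

lemma c00_weighted_sum:
  assumes "finite I" "\<And>i. i \<in> I \<Longrightarrow> u i \<in> c00"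
  shows "(\<lambda>b. \<Sum>i\<in>I. c i * u i b) \<in> c00"
proof -
  have "{b. (\<Sum>i\<in>I. c i * u i b) \<noteq> 0} \<subseteq> (\<Union>i\<in>I. {b. u i b \<noteq> 0})"
    using sum.not_neutral_contains_not_neutral by fastforce
  moreover have "finite (\<Union>i\<in>I. {b. u i b \<noteq> 0})" using assms by (auto simp: c00_def)
  ultimately show ?thesis unfolding c00_def by (auto intro: finite_subset)
qed

lemma l1dist_nonneg: "0 \<le> l1dist u v"
  by (simp add: l1dist_def l1norm_nonneg)

lemma l1dist_commute: "l1dist u v = l1dist v u"
  unfolding l1dist_def l1norm_def by (simp add: abs_minus_commute)

lemma l1dist_triangle:
  assumes "x \<in> ell1" "y \<in> ell1" "z \<in> ell1"
  shows "l1dist x z \<le> l1dist x y + l1dist y z"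
proof -
  have "l1dist x z = l1norm (\<lambda>a. (x a - y a) + (y a - z a))" by (simp add: l1dist_def)
  also have "\<dots> \<le> l1dist x y + l1dist y z"
    unfolding l1dist_def using assms by (intro l1norm_add_le ell1_diff)
  finally show ?thesis .
qed

lemma abs_diff_le_l1dist: "y \<in> ell1 \<Longrightarrow> z \<in> ell1 \<Longrightarrow> \<bar>y a - z a\<bar> \<le> l1dist y z"
  unfolding l1dist_def using abs_le_l1norm[OF ell1_diff, of y z a] by simp

lemma sum_abs_diff_le_l1dist:
  "y \<in> ell1 \<Longrightarrow> z \<in> ell1 \<Longrightarrow> finite F \<Longrightarrow> (\<Sum>a\<in>F. \<bar>y a - z a\<bar>) \<le> l1dist y z"
  unfolding l1dist_def using sum_abs_le_l1norm[OF ell1_diff, of y z F] by simp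

lemma l1norm_diff_le_finite_support:
  assumes y: "y \<in> ell1" and F: "finite F" and q: "\<And>b. b \<notin> F \<Longrightarrow> q b = 0"
  shows "l1norm (\<lambda>b. q b - y b) \<le> (\<Sum>a\<in>F. \<bar>q a - y a\<bar>) + (l1norm y - (\<Sum>a\<in>F. \<bar>y a\<bar>))"
proof (rule l1norm_le_bound)
  fix G :: "'a set" assume G: "finite G"
  have "(\<Sum>a\<in>G. \<bar>q a - y a\<bar>) = (\<Sum>a\<in>G \<inter> F. \<bar>q a - y a\<bar>) + (\<Sum>a\<in>G - F. \<bar>y a\<bar>)"
    using q by (simp add: sum.Int_Diff[OF G, of _ F])
  also have "(\<Sum>a\<in>G \<inter> F. \<bar>q a - y a\<bar>) \<le> (\<Sum>a\<in>F. \<bar>q a - y a\<bar>)"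
    using F by (intro sum_mono2) auto
  also have "(\<Sum>a\<in>G - F. \<bar>y a\<bar>) \<le> l1norm y - (\<Sum>a\<in>F. \<bar>y a\<bar>)"
  proof -
    have "(\<Sum>a\<in>G - F. \<bar>y a\<bar>) + (\<Sum>a\<in>F. \<bar>y a\<bar>) = (\<Sum>a\<in>(G - F) \<union> F. \<bar>y a\<bar>)"
      using G F by (intro sum.union_disjoint[symmetric]) auto
    also have "\<dots> \<le> l1norm y" using G F by (intro sum_abs_le_l1norm y) auto
    finally show ?thesis by simp
  qed
  finally show "(\<Sum>a\<in>G. \<bar>q a - y a\<bar>) \<le> (\<Sum>a\<in>F. \<bar>q a - y a\<bar>) + (l1norm y - (\<Sum>a\<in>F. \<bar>y a\<bar>))"
    by simp
qed

lemma Metric_space_l1dist: "Y \<subseteq> ell1 \<Longrightarrow> Metric_space Y l1dist"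
proof unfold_locales
  show "0 \<le> l1dist x y" for x y :: "'a \<Rightarrow> real"
    by (rule l1dist_nonneg)
  show "l1dist x y = l1dist y x" for x y :: "'a \<Rightarrow> real"
    by (rule l1dist_commute)
  fix x y z :: "'a \<Rightarrow> real"
  assume "Y \<subseteq> ell1" and "x \<in> Y" "y \<in> Y" "z \<in> Y"
  then have ell1: "x \<in> ell1" "y \<in> ell1" "z \<in> ell1" by auto
  show "l1dist x y = 0 \<longleftrightarrow> x = y"
    using abs_diff_le_l1dist[OF ell1(1,2)] by (force simp: l1dist_def l1norm_def fun_eq_iff)
  show "l1dist x z \<le> l1dist x y + l1dist y z"
    by (rule l1dist_triangle[OF ell1])
qed

lemma continuous_on_UNIV_real_iff:
  fixes g :: "'x::topological_space \<Rightarrow> real"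
  shows "continuous_on UNIV g \<longleftrightarrow>
    (\<forall>x0 e. e > 0 \<longrightarrow> (\<exists>W. open W \<and> x0 \<in> W \<and> (\<forall>x\<in>W. \<bar>g x - g x0\<bar> < e)))"
proof
  assume "continuous_on UNIV g"
  show "\<forall>x0 e. e > 0 \<longrightarrow> (\<exists>W. open W \<and> x0 \<in> W \<and> (\<forall>x\<in>W. \<bar>g x - g x0\<bar> < e))"
  proof (intro allI impI)
    fix x0 and e :: real assume "e > 0"
    have "open (g -` ball (g x0) e)"
      using \<open>continuous_on UNIV g\<close> by (simp add: continuous_on_open_vimage)
    with \<open>e > 0\<close> show "\<exists>W. open W \<and> x0 \<in> W \<and> (\<forall>x\<in>W. \<bar>g x - g x0\<bar> < e)"
      by (intro exI[of _ "g -` ball (g x0) e"]) (auto simp: dist_real_def abs_minus_commute)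
  qed
next
  assume local: "\<forall>x0 e. e > 0 \<longrightarrow> (\<exists>W. open W \<and> x0 \<in> W \<and> (\<forall>x\<in>W. \<bar>g x - g x0\<bar> < e))"
  show "continuous_on UNIV g"
    unfolding continuous_on_topological
  proof (intro ballI allI impI)
    fix x0 B assume "open B" "g x0 \<in> B"
    then obtain e where "e > 0" "ball (g x0) e \<subseteq> B" by (meson openE)
    with local obtain W where "open W" "x0 \<in> W" "\<forall>x\<in>W. \<bar>g x - g x0\<bar> < e" by blast
    with \<open>ball (g x0) e \<subseteq> B\<close> show "\<exists>A. open A \<and> x0 \<in> A \<and> (\<forall>y\<in>UNIV. y \<in> A \<longrightarrow> g y \<in> B)"
      by (intro exI[of _ W]) (auto simp: dist_real_def abs_minus_commute)
  qed
qed

lemma continuous_on_UNIV_if_local: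
  assumes "\<And>x. \<exists>W. open W \<and> x \<in> W \<and> continuous_on W f"
  shows "continuous_on UNIV f"
proof -
  have "continuous_on (\<Union>{W. open W \<and> continuous_on W f}) f"
    by (rule continuous_on_open_Union) auto
  moreover have "\<Union>{W. open W \<and> continuous_on W f} = UNIV" using assms by blast
  ultimately show ?thesis by simp
qed

lemma continuous_map_l1top_iff:
  fixes f :: "'x::topological_space \<Rightarrow> 'a \<Rightarrow> real"
  assumes "Y \<subseteq> ell1"
  shows "continuous_map euclidean (l1top Y) f \<longleftrightarrow> (\<forall>x. f x \<in> Y) \<and>
    (\<forall>x0 e. e > 0 \<longrightarrow> (\<exists>W. open W \<and> x0 \<in> W \<and> (\<forall>x\<in>W. l1dist (f x0) (f x) < e)))"
    (is "_ \<longleftrightarrow> ?into \<and> ?local")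
proof -
  interpret Metric_space Y l1dist by (rule Metric_space_l1dist[OF assms])
  have "continuous_map euclidean (l1top Y) f \<longleftrightarrow>
    (\<forall>x0 e. e > 0 \<longrightarrow> (\<exists>W. open W \<and> x0 \<in> W \<and> (\<forall>x\<in>W. f x \<in> mball (f x0) e)))"
    unfolding l1top_def continuous_map_to_metric by auto
  also have "\<dots> \<longleftrightarrow> ?into \<and> ?local"
  proof
    assume balls: "\<forall>x0 e. e > 0 \<longrightarrow> (\<exists>W. open W \<and> x0 \<in> W \<and> (\<forall>x\<in>W. f x \<in> mball (f x0) e))"
    then have ?into by (metis centre_in_mball_iff zero_less_one)
    moreover have ?local using balls by (meson in_mball)
    ultimately show "?into \<and> ?local" ..
  next
    assume "?into \<and> ?local"
    then show "\<forall>x0 e. e > 0 \<longrightarrow> (\<exists>W. open W \<and> x0 \<in> W \<and> (\<forall>x\<in>W. f x \<in> mball (f x0) e))"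
      by (simp add: in_mball)
  qed
  finally show ?thesis .
qed

lemma continuous_on_coordinate:
  fixes f :: "'x::topological_space \<Rightarrow> 'a \<Rightarrow> real"
  assumes Y: "Y \<subseteq> ell1" and f: "continuous_map euclidean (l1top Y) f"
  shows "continuous_on UNIV (\<lambda>x. f x a)"
  unfolding continuous_on_UNIV_real_iff
proof (intro allI impI)
  fix x0 and e :: real assume "e > 0"
  then obtain W where W: "open W" "x0 \<in> W" "\<forall>x\<in>W. l1dist (f x0) (f x) < e"
    using f unfolding continuous_map_l1top_iff[OF Y] by blast
  have "f x \<in> ell1" for x using f Y unfolding continuous_map_l1top_iff[OF Y] by blast
  then have "\<bar>f x a - f x0 a\<bar> < e" if "x \<in> W" for x
    using abs_diff_le_l1dist[of "f x0" "f x" a] W(3) that by (metis abs_minus_commute le_less_trans)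
  with W show "\<exists>W. open W \<and> x0 \<in> W \<and> (\<forall>x\<in>W. \<bar>f x a - f x0 a\<bar> < e)" by blast
qed

section \<open>Convex l.s.c. mappings\<close>

lemma convex_fun_setD:
  "convex_fun_set S \<Longrightarrow> y \<in> S \<Longrightarrow> z \<in> S \<Longrightarrow> 0 \<le> t \<Longrightarrow> t \<le> 1 \<Longrightarrow>
    (\<lambda>a. t * y a + (1 - t) * z a) \<in> S"
  unfolding convex_fun_set_def by blast

lemma convex_fun_set_sum:
  assumes S: "convex_fun_set S" and "finite I" "I \<noteq> {}"
    and "\<forall>i\<in>I. 0 \<le> w i" "sum w I = 1" "\<forall>i\<in>I. y i \<in> S"
  shows "(\<lambda>b. \<Sum>i\<in>I. w i * y i b) \<in> S"
  using assms(2-)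
proof (induction I arbitrary: w rule: finite_ne_induct)
  case (singleton j)
  then show ?case by simp
next
  case (insert j I)
  have w_insert: "w j + sum w I = 1" using insert by simp
  show ?case
  proof (cases "sum w I = 0")
    case True
    then have "\<forall>i\<in>I. w i = 0" using insert by (simp add: sum_nonneg_eq_0_iff)
    then have "(\<lambda>b. \<Sum>i\<in>insert j I. w i * y i b) = y j" using insert True by (auto simp: fun_eq_iff)
    then show ?thesis using insert by simp
  next
    case False
    define s where "s = sum w I"
    have "s > 0" using False insert by (simp add: s_def less_le sum_nonneg)
    have "(\<lambda>b. \<Sum>i\<in>I. w i / s * y i b) \<in> S"
      using insert.IH[of "\<lambda>i. w i / s"] insert.prems \<open>s > 0\<close>
      by (simp add: s_def sum_divide_distrib[symmetric])
    then have "(\<lambda>b. w j * y j b + (1 - w j) * (\<Sum>i\<in>I. w i / s * y i b)) \<in> S"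
      using insert.prems w_insert \<open>s > 0\<close> s_def by (intro convex_fun_setD[OF S]) auto
    moreover have "1 - w j = s" using w_insert s_def by simp
    then have "(1 - w j) * (\<Sum>i\<in>I. w i / s * y i b) = (\<Sum>i\<in>I. w i * y i b)" for b
      using \<open>s > 0\<close> by (simp add: sum_distrib_left)
    ultimately show ?thesis using insert by simp
  qed
qed

lemma convex_fun_set_c00: "convex_fun_set c00"
  unfolding convex_fun_set_def
proof (intro ballI allI impI)
  fix y z :: "'a \<Rightarrow> real" and t :: real
  assume "y \<in> c00" "z \<in> c00"
  then have "finite ({a. y a \<noteq> 0} \<union> {a. z a \<noteq> 0})" by (simp add: c00_def)
  then have "finite {a. t * y a + (1 - t) * z a \<noteq> 0}" by (rule rev_finite_subset) auto
  then show "(\<lambda>a. t * y a + (1 - t) * z a) \<in> c00" by (simp add: c00_def)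
qed

lemma convex_fun_set_ell1: "convex_fun_set ell1"
  unfolding convex_fun_set_def by (intro ballI allI impI ell1_add ell1_scale)

lemma convex_fun_set_l1dist_less:
  assumes C: "convex_fun_set C" "C \<subseteq> ell1" and c: "c \<in> ell1"
  shows "convex_fun_set {y \<in> C. l1dist c y < \<epsilon>}"
  unfolding convex_fun_set_def
proof (intro ballI allI impI)
  fix y z and t :: real
  assume y: "y \<in> {y \<in> C. l1dist c y < \<epsilon>}" and z: "z \<in> {y \<in> C. l1dist c y < \<epsilon>}"
    and t: "0 \<le> t \<and> t \<le> 1"
  have yz: "(\<lambda>a. c a - y a) \<in> ell1" "(\<lambda>a. c a - z a) \<in> ell1"
    using y z C c by (auto intro: ell1_diff)
  have "l1dist c (\<lambda>a. t * y a + (1 - t) * z a) =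
      l1norm (\<lambda>a. t * (c a - y a) + (1 - t) * (c a - z a))"
    unfolding l1dist_def by (simp add: algebra_simps)
  also have "\<dots> \<le> t * l1dist c y + (1 - t) * l1dist c z"
    using l1norm_add_le[OF ell1_scale[OF yz(1)] ell1_scale[OF yz(2)], of t "1 - t"] t
      l1norm_scale[OF yz(1), of t] l1norm_scale[OF yz(2), of "1 - t"]
    by (simp add: l1dist_def)
  also have "\<dots> < \<epsilon>"
    using y z t by (cases "t = 0") (auto intro: convex_bound_lt)
  finally show "(\<lambda>a. t * y a + (1 - t) * z a) \<in> {y \<in> C. l1dist c y < \<epsilon>}"
    using convex_fun_setD[OF C(1)] y z t by blast
qed

lemma l1dist_convex_combination_less:
  assumes S: "finite S" and w: "\<forall>\<alpha>\<in>S. 0 \<le> w \<alpha>" "sum w S = 1"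
    and uv: "\<forall>\<alpha>\<in>S. u \<alpha> \<in> ell1 \<and> v \<alpha> \<in> ell1 \<and> l1dist (u \<alpha>) (v \<alpha>) < \<epsilon>"
  shows "l1dist (\<lambda>b. \<Sum>\<alpha>\<in>S. w \<alpha> * u \<alpha> b) (\<lambda>b. \<Sum>\<alpha>\<in>S. w \<alpha> * v \<alpha> b) < \<epsilon>"
proof -
  have "l1dist (\<lambda>b. \<Sum>\<alpha>\<in>S. w \<alpha> * u \<alpha> b) (\<lambda>b. \<Sum>\<alpha>\<in>S. w \<alpha> * v \<alpha> b) =
      l1norm (\<lambda>b. \<Sum>\<alpha>\<in>S. w \<alpha> * (u \<alpha> b - v \<alpha> b))"
    by (simp add: l1dist_def sum_subtractf[symmetric] right_diff_distrib)
  also have "\<dots> \<le> (\<Sum>\<alpha>\<in>S. \<bar>w \<alpha>\<bar> * l1norm (\<lambda>b. u \<alpha> b - v \<alpha> b))"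
    using uv by (intro l1norm_weighted_sum_le[OF S]) (auto intro: ell1_diff)
  also have "\<dots> = (\<Sum>\<alpha>\<in>S. w \<alpha> * l1dist (u \<alpha>) (v \<alpha>))"
    using w by (simp add: l1dist_def)
  also have "\<dots> < (\<Sum>\<alpha>\<in>S. w \<alpha> * \<epsilon>)"
  proof (rule sum_strict_mono_ex1[OF S])
    show "\<forall>\<alpha>\<in>S. w \<alpha> * l1dist (u \<alpha>) (v \<alpha>) \<le> w \<alpha> * \<epsilon>"
      using w uv by (auto intro: mult_left_mono less_imp_le)
    obtain \<alpha> where "\<alpha> \<in> S" "w \<alpha> \<noteq> 0" using w(2) by (metis sum.neutral zero_neq_one)
    then show "\<exists>\<alpha>\<in>S. w \<alpha> * l1dist (u \<alpha>) (v \<alpha>) < w \<alpha> * \<epsilon>"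
      using w uv by (intro bexI[of _ \<alpha>]) auto
  qed
  also have "\<dots> = \<epsilon>" using w(2) by (simp add: sum_distrib_right[symmetric])
  finally show ?thesis .
qed

lemma convex_lsc_mappingD:
  assumes "convex_lsc_mapping \<Phi> Y"
  shows "\<Phi> x \<noteq> {}" "\<Phi> x \<subseteq> Y" "convex_fun_set (\<Phi> x)"
    and "openin (l1top Y) V \<Longrightarrow> open {x. \<Phi> x \<inter> V \<noteq> {}}"
  using assms unfolding convex_lsc_mapping_def by auto

lemma lower_semicontinuous_l1dist_restrict:
  fixes \<Phi> :: "'x::topological_space \<Rightarrow> ('a \<Rightarrow> real) set"
  assumes Y: "Y \<subseteq> ell1" and \<Phi>: "convex_lsc_mapping \<Phi> Y"
    and f: "continuous_map euclidean (l1top Y) f" and V: "openin (l1top Y) V"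
  shows "open {x. {y \<in> \<Phi> x. l1dist (f x) y < \<epsilon>} \<inter> V \<noteq> {}}"
proof (subst open_subopen, intro ballI)
  interpret Metric_space Y l1dist by (rule Metric_space_l1dist[OF Y])
  have fY: "f x \<in> Y" for x using f unfolding continuous_map_l1top_iff[OF Y] by blast
  fix x0 assume "x0 \<in> {x. {y \<in> \<Phi> x. l1dist (f x) y < \<epsilon>} \<inter> V \<noteq> {}}"
  then obtain y where y: "y \<in> \<Phi> x0" "l1dist (f x0) y < \<epsilon>" "y \<in> V" by blast
  have "y \<in> Y" using y(1) convex_lsc_mappingD(2)[OF \<Phi>] by blast
  define \<delta> where "\<delta> = \<epsilon> - l1dist (f x0) y"
  have "\<delta> > 0" using y(2) by (simp add: \<delta>_def)
  obtain r where r: "r > 0" "mball y r \<subseteq> V"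
    using V y(3) unfolding l1top_def openin_mtopology by blast
  define \<rho> where "\<rho> = min r (\<delta>/2)"
  have \<rho>: "\<rho> > 0" "\<rho> \<le> r" "\<rho> \<le> \<delta>/2" using r \<open>\<delta> > 0\<close> by (auto simp: \<rho>_def)
  have "open {x. \<Phi> x \<inter> mball y \<rho> \<noteq> {}}"
    by (rule convex_lsc_mappingD(4)[OF \<Phi>]) (simp add: l1top_def openin_mball)
  moreover obtain W where W: "open W" "x0 \<in> W" "\<forall>x\<in>W. l1dist (f x0) (f x) < \<delta>/2"
    using f[unfolded continuous_map_l1top_iff[OF Y]] \<open>\<delta> > 0\<close> half_gt_zero by blast
  moreover have "x0 \<in> {x. \<Phi> x \<inter> mball y \<rho> \<noteq> {}}" using y(1) \<open>y \<in> Y\<close> \<rho>(1) by auto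
  moreover have "{x. \<Phi> x \<inter> mball y \<rho> \<noteq> {}} \<inter> W \<subseteq> {x. {y \<in> \<Phi> x. l1dist (f x) y < \<epsilon>} \<inter> V \<noteq> {}}"
  proof
    fix x assume x: "x \<in> {x. \<Phi> x \<inter> mball y \<rho> \<noteq> {}} \<inter> W"
    then obtain z where z: "z \<in> \<Phi> x" "z \<in> mball y \<rho>" by blast
    then have "z \<in> Y" "l1dist y z < \<rho>" by auto
    have "l1dist (f x) z \<le> l1dist (f x) (f x0) + (l1dist (f x0) y + l1dist y z)"
      using triangle[OF fY[of x] fY[of x0] \<open>z \<in> Y\<close>] triangle[OF fY[of x0] \<open>y \<in> Y\<close> \<open>z \<in> Y\<close>]
      by linarith
    also have "\<dots> < \<epsilon>"
      using W(3) x \<open>l1dist y z < \<rho>\<close> \<rho>(3) commute[of "f x" "f x0"] by (auto simp: \<delta>_def)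
    finally have "l1dist (f x) z < \<epsilon>" .
    moreover have "z \<in> V" using z(2) r(2) \<rho>(2) mball_subset_concentric by blast
    ultimately show "x \<in> {x. {y \<in> \<Phi> x. l1dist (f x) y < \<epsilon>} \<inter> V \<noteq> {}}" using z(1) by blast
  qed
  ultimately show "\<exists>T. open T \<and> x0 \<in> T \<and> T \<subseteq> {x. {y \<in> \<Phi> x. l1dist (f x) y < \<epsilon>} \<inter> V \<noteq> {}}"
    by (intro exI[of _ "{x. \<Phi> x \<inter> mball y \<rho> \<noteq> {}} \<inter> W"]) auto
qed

lemma convex_lsc_mapping_restrict:
  fixes \<Phi> :: "'x::topological_space \<Rightarrow> ('a \<Rightarrow> real) set"
  assumes Y: "Y \<subseteq> ell1" and \<Phi>: "convex_lsc_mapping \<Phi> Y"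
    and f: "continuous_map euclidean (l1top Y) f" and sel: "is_eps_selection \<epsilon> \<Phi> f"
  shows "convex_lsc_mapping (\<lambda>x. {y \<in> \<Phi> x. l1dist (f x) y < \<epsilon>}) Y"
proof -
  have fY: "f x \<in> Y" for x using f unfolding continuous_map_l1top_iff[OF Y] by blast
  have "{y \<in> \<Phi> x. l1dist (f x) y < \<epsilon>} \<noteq> {}" for x
    using sel unfolding is_eps_selection_def by blast
  moreover have "convex_fun_set {y \<in> \<Phi> x. l1dist (f x) y < \<epsilon>}" for x
    by (rule convex_fun_set_l1dist_less[OF convex_lsc_mappingD(3)[OF \<Phi>]])
      (use convex_lsc_mappingD(2)[OF \<Phi>] fY Y in blast)+
  moreover have "open {x. {y \<in> \<Phi> x. l1dist (f x) y < \<epsilon>} \<inter> V \<noteq> {}}" if "openin (l1top Y) V" for V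
    by (rule lower_semicontinuous_l1dist_restrict[OF Y \<Phi> f that])
  ultimately show ?thesis
    unfolding convex_lsc_mapping_def using convex_lsc_mappingD(2)[OF \<Phi>] by blast
qed

section \<open>Locally finite partitions of unity\<close>

lemma nonneg_has_sum_one_iff:
  fixes w :: "'a \<Rightarrow> real"
  assumes nonneg: "\<And>a. 0 \<le> w a"
  shows "(w has_sum 1) UNIV \<longleftrightarrow>
    (\<forall>G. finite G \<longrightarrow> sum w G \<le> 1) \<and> (\<forall>\<delta>>0. \<exists>G. finite G \<and> 1 - \<delta> < sum w G)"
proof
  assume hs: "(w has_sum 1) UNIV"
  show "(\<forall>G. finite G \<longrightarrow> sum w G \<le> 1) \<and> (\<forall>\<delta>>0. \<exists>G. finite G \<and> 1 - \<delta> < sum w G)"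
  proof (intro conjI allI impI)
    fix G :: "'a set" assume "finite G"
    then show "sum w G \<le> 1" using nonneg by (intro finite_sum_le_has_sum[OF hs]) auto
  next
    fix \<delta> :: real assume "\<delta> > 0"
    then obtain G where "finite G" "dist (sum w G) 1 \<le> \<delta>/2"
      using has_sum_finite_approximation[OF hs, of "\<delta>/2"] by auto
    moreover have "1 - \<delta> < sum w G"
      using abs_le_D2[OF \<open>dist (sum w G) 1 \<le> \<delta>/2\<close>[unfolded dist_real_def]] \<open>\<delta> > 0\<close> by linarith
    ultimately show "\<exists>G. finite G \<and> 1 - \<delta> < sum w G" by blast
  qed
next
  assume bounds: "(\<forall>G. finite G \<longrightarrow> sum w G \<le> 1) \<and> (\<forall>\<delta>>0. \<exists>G. finite G \<and> 1 - \<delta> < sum w G)"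
  define S where "S = (SUP G\<in>{G. finite G \<and> G \<subseteq> UNIV}. sum w G)"
  have bdd: "bdd_above (sum w ` {G. finite G \<and> G \<subseteq> UNIV})"
    using bounds by (intro bdd_aboveI[of _ 1]) auto
  have "(w has_sum S) UNIV"
    unfolding S_def using nonneg bdd by (intro nonneg_bdd_above_has_sum) (auto simp: conj_commute)
  moreover have "S = 1"
  proof (rule antisym)
    show "S \<le> 1" unfolding S_def using bounds by (intro cSUP_least) auto
    show "1 \<le> S"
    proof (rule field_le_epsilon)
      fix \<delta> :: real assume "\<delta> > 0"
      then obtain G where "finite G" "1 - \<delta> < sum w G" using bounds by blast
      moreover have "sum w G \<le> S" unfolding S_def using \<open>finite G\<close> bdd by (intro cSUP_upper) auto
      ultimately show "1 \<le> S + \<delta>" by simp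
    qed
  qed
  ultimately show "(w has_sum 1) UNIV" by simp
qed

lemma partition_of_unity_support_sum:
  assumes "partition_of_unity \<phi>" "finite {a. \<phi> a x \<noteq> 0}"
  shows "(\<Sum>a\<in>{a. \<phi> a x \<noteq> 0}. \<phi> a x) = 1"
proof -
  have "((\<lambda>a. \<phi> a x) has_sum (\<Sum>a\<in>{a. \<phi> a x \<noteq> 0}. \<phi> a x)) UNIV"
    using assms(2) by (intro has_sum_finite_neutralI) auto
  moreover have "((\<lambda>a. \<phi> a x) has_sum 1) UNIV"
    using assms(1) by (simp add: partition_of_unity_def)
  ultimately show ?thesis by (rule has_sum_unique)
qed

lemma partition_of_unity_small_off_finite:
  assumes pu: "partition_of_unity \<xi>" and "\<delta> > 0"
  shows "\<exists>F W. finite F \<and> open W \<and> p \<in> W \<and> (\<forall>x\<in>W. \<forall>b. b \<notin> F \<longrightarrow> \<xi> b x < \<delta>)"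
proof -
  have sums: "(\<forall>G. finite G \<longrightarrow> (\<Sum>a\<in>G. \<xi> a x) \<le> 1) \<and>
      (\<forall>\<delta>>0. \<exists>G. finite G \<and> 1 - \<delta> < (\<Sum>a\<in>G. \<xi> a x))" for x
    using pu nonneg_has_sum_one_iff[of "\<lambda>a. \<xi> a x"] by (simp add: partition_of_unity_def)
  then obtain F where F: "finite F" "1 - \<delta> < (\<Sum>a\<in>F. \<xi> a p)" using \<open>\<delta> > 0\<close> by blast
  define W where "W = (\<lambda>x. \<Sum>a\<in>F. \<xi> a x) -` {1 - \<delta><..}"
  have "open W"
    unfolding W_def using pu
    by (intro open_vimage continuous_on_sum) (auto simp: partition_of_unity_def)
  moreover have "\<xi> b x < \<delta>" if "x \<in> W" "b \<notin> F" for x b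
  proof -
    have "(\<Sum>a\<in>insert b F. \<xi> a x) \<le> 1" using sums[of x] F(1) by blast
    then have "\<xi> b x + (\<Sum>a\<in>F. \<xi> a x) \<le> 1" using F(1) that(2) by simp
    with that(1) show ?thesis unfolding W_def by simp
  qed
  ultimately show ?thesis using F unfolding W_def by auto
qed

lemma bdd_above_partition_of_unity: "partition_of_unity \<xi> \<Longrightarrow> bdd_above (range (\<lambda>a. \<xi> a x))"
  unfolding partition_of_unity_def by (intro bdd_aboveI[of _ 1]) auto

lemma partition_of_unity_Sup_pos:
  assumes pu: "partition_of_unity \<xi>"
  shows "0 < (SUP a. \<xi> a x)"
proof -
  have "((\<lambda>a. \<xi> a x) has_sum 1) UNIV" "\<And>a. 0 \<le> \<xi> a x"
    using pu by (auto simp: partition_of_unity_def)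
  then have "\<exists>F. finite F \<and> 1 - 1 < (\<Sum>a\<in>F. \<xi> a x)"
    using nonneg_has_sum_one_iff[of "\<lambda>a. \<xi> a x"] zero_less_one by blast
  then obtain F where "finite F" "0 < (\<Sum>a\<in>F. \<xi> a x)" by auto
  then obtain a where "0 < \<xi> a x" by (meson not_le sum_nonpos)
  also have "\<xi> a x \<le> (SUP a. \<xi> a x)" by (rule cSUP_upper[OF UNIV_I bdd_above_partition_of_unity[OF pu]])
  finally show ?thesis .
qed

lemma continuous_on_partition_of_unity_Sup:
  assumes pu: "partition_of_unity \<xi>"
  shows "continuous_on UNIV (\<lambda>x. SUP a. \<xi> a x)"
  unfolding continuous_on_UNIV_real_iff
proof (intro allI impI)
  fix x0 and e :: real assume "e > 0"
  define s where "s x = (SUP a. \<xi> a x)" for x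
  have le_s: "\<xi> a x \<le> s x" for a x
    unfolding s_def by (rule cSUP_upper[OF UNIV_I bdd_above_partition_of_unity[OF pu]])
  have "s x0 - e/2 < (SUP a. \<xi> a x0)" using \<open>e > 0\<close> by (simp add: s_def)
  then obtain a where a: "s x0 - e/2 < \<xi> a x0"
    using less_cSUP_iff[OF UNIV_not_empty bdd_above_partition_of_unity[OF pu]] by blast
  obtain F W2 where W2: "finite F" "open W2" "x0 \<in> W2" "\<forall>x\<in>W2. \<forall>b. b \<notin> F \<longrightarrow> \<xi> b x < s x0 + e/2"
    using partition_of_unity_small_off_finite[OF pu, of "s x0 + e/2" x0]
      partition_of_unity_Sup_pos[OF pu, of x0] \<open>e > 0\<close> by (auto simp: s_def)
  define h where "h x = (\<Sum>b\<in>insert a F. \<bar>\<xi> b x - \<xi> b x0\<bar>)" for x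
  have "continuous_on UNIV h"
    unfolding h_def using pu
    by (intro continuous_on_sum continuous_on_rabs continuous_on_diff continuous_on_const)
      (auto simp: partition_of_unity_def)
  then obtain W1 where W1: "open W1" "x0 \<in> W1" "\<forall>x\<in>W1. \<bar>h x - h x0\<bar> < e/2"
    using \<open>e > 0\<close> unfolding continuous_on_UNIV_real_iff by (meson half_gt_zero)
  have "\<bar>s x - s x0\<bar> < e" if "x \<in> W1 \<inter> W2" for x
  proof -
    have near: "\<bar>\<xi> b x - \<xi> b x0\<bar> < e/2" if "b \<in> insert a F" for b
    proof -
      have "\<bar>\<xi> b x - \<xi> b x0\<bar> \<le> h x"
        unfolding h_def using W2(1) that by (intro member_le_sum) auto
      also have "h x < e/2" using W1(3) \<open>x \<in> W1 \<inter> W2\<close> by (simp add: h_def)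
      finally show ?thesis .
    qed
    have "s x0 - e < s x" using a near[OF insertI1] le_s[of a x] unfolding abs_diff_less_iff by auto
    moreover have "\<xi> b x \<le> s x0 + e/2" for b
    proof (cases "b \<in> F")
      case True
      then show ?thesis using near[of b, OF insertI2] le_s[of b x0] unfolding abs_diff_less_iff by auto
    next
      case False
      then have "\<xi> b x < s x0 + e/2" using W2(4) that by blast
      then show ?thesis by simp
    qed
    then have "s x \<le> s x0 + e/2" unfolding s_def by (intro cSUP_least) auto
    ultimately show ?thesis using \<open>e > 0\<close> by linarith
  qed
  then show "\<exists>W. open W \<and> x0 \<in> W \<and> (\<forall>x\<in>W. \<bar>(SUP a. \<xi> a x) - (SUP a. \<xi> a x0)\<bar> < e)"
    using W1 W2 unfolding s_def by (intro exI[of _ "W1 \<inter> W2"]) auto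
qed

definition locally_finite_family :: "('a \<Rightarrow> 'x::topological_space \<Rightarrow> real) \<Rightarrow> bool" where
  "locally_finite_family \<phi> \<longleftrightarrow>
     (\<forall>x0. \<exists>W F. open W \<and> x0 \<in> W \<and> finite F \<and> (\<forall>x\<in>W. \<forall>a. a \<notin> F \<longrightarrow> \<phi> a x = 0))"

lemma locally_finite_familyE:
  assumes "locally_finite_family \<phi>"
  obtains W F where "open W" "p \<in> W" "finite F" "\<And>x a. x \<in> W \<Longrightarrow> a \<notin> F \<Longrightarrow> \<phi> a x = 0"
  using assms unfolding locally_finite_family_def by meson

lemma locally_finite_family_finite_support:
  assumes "locally_finite_family \<phi>"
  shows "finite {a. \<phi> a x \<noteq> 0}"
proof -
  obtain W F where "x \<in> W" "finite F" "\<And>y a. y \<in> W \<Longrightarrow> a \<notin> F \<Longrightarrow> \<phi> a y = 0"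
    using locally_finite_familyE[OF assms] by metis
  then show ?thesis by (metis (mono_tags, lifting) finite_subset mem_Collect_eq subsetI)
qed

lemma continuous_on_locally_finite_sum:
  fixes \<phi> :: "'a \<Rightarrow> 'x::topological_space \<Rightarrow> real"
  assumes cont: "\<And>a. continuous_on UNIV (\<phi> a)" and lf: "locally_finite_family \<phi>"
  shows "continuous_on UNIV (\<lambda>x. \<Sum>a\<in>{a. \<phi> a x \<noteq> 0}. \<phi> a x)"
proof (rule continuous_on_UNIV_if_local)
  fix x0 :: 'x
  obtain W F where W: "open W" "x0 \<in> W" "finite F" "\<And>x a. x \<in> W \<Longrightarrow> a \<notin> F \<Longrightarrow> \<phi> a x = 0"
    using locally_finite_familyE[OF lf, where p=x0] by blast
  have "continuous_on W (\<lambda>x. \<Sum>a\<in>F. \<phi> a x)"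
    by (intro continuous_on_sum continuous_on_subset[OF cont]) auto
  moreover have "(\<Sum>a\<in>{a. \<phi> a x \<noteq> 0}. \<phi> a x) = (\<Sum>a\<in>F. \<phi> a x)" if "x \<in> W" for x
    using W that by (intro sum.mono_neutral_left) auto
  ultimately have "continuous_on W (\<lambda>x. \<Sum>a\<in>{a. \<phi> a x \<noteq> 0}. \<phi> a x)"
    by (simp cong: continuous_on_cong)
  with W show "\<exists>W. open W \<and> x0 \<in> W \<and> continuous_on W (\<lambda>x. \<Sum>a\<in>{a. \<phi> a x \<noteq> 0}. \<phi> a x)"
    by blast
qed

lemma locally_finite_family_normalize:
  fixes \<psi> :: "'a \<Rightarrow> 'x::topological_space \<Rightarrow> real"
  assumes cont: "\<And>a. continuous_on UNIV (\<psi> a)" and nonneg: "\<And>a x. 0 \<le> \<psi> a x"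
    and lf: "locally_finite_family \<psi>" and pos: "\<And>x. \<exists>a. 0 < \<psi> a x"
  obtains \<phi> where "partition_of_unity \<phi>" "locally_finite_family \<phi>"
    "\<And>a x. \<phi> a x \<noteq> 0 \<Longrightarrow> \<psi> a x \<noteq> 0"
proof -
  define P where "P x = (\<Sum>b\<in>{b. \<psi> b x \<noteq> 0}. \<psi> b x)" for x
  define \<phi> where "\<phi> a x = \<psi> a x / P x" for a x
  have fin: "finite {b. \<psi> b x \<noteq> 0}" for x by (rule locally_finite_family_finite_support[OF lf])
  have P_pos: "0 < P x" for x
  proof -
    obtain a where "0 < \<psi> a x" using pos by blast
    then show ?thesis unfolding P_def using fin nonneg by (intro sum_pos2[of _ a]) auto
  qed
  have support: "\<phi> a x \<noteq> 0 \<longleftrightarrow> \<psi> a x \<noteq> 0" for a x using P_pos[of x] by (simp add: \<phi>_def)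
  have "locally_finite_family \<phi>"
    unfolding locally_finite_family_def
  proof
    fix x0
    obtain W F where "open W" "x0 \<in> W" "finite F" "\<And>x a. x \<in> W \<Longrightarrow> a \<notin> F \<Longrightarrow> \<psi> a x = 0"
      using locally_finite_familyE[OF lf, where p=x0] by blast
    then show "\<exists>W F. open W \<and> x0 \<in> W \<and> finite F \<and> (\<forall>x\<in>W. \<forall>a. a \<notin> F \<longrightarrow> \<phi> a x = 0)"
      by (intro exI[of _ W] exI[of _ F]) (simp add: \<phi>_def)
  qed
  moreover have "partition_of_unity \<phi>"
    unfolding partition_of_unity_def
  proof (intro conjI allI)
    fix a x
    have "continuous_on UNIV P" unfolding P_def by (rule continuous_on_locally_finite_sum[OF cont lf])
    then show "continuous_on UNIV (\<phi> a)"
      unfolding \<phi>_def[abs_def] using cont P_pos by (intro continuous_on_divide) (auto simp: less_le)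
    have sum_one: "(\<Sum>b\<in>{b. \<psi> b x \<noteq> 0}. \<phi> b x) = 1"
      using P_pos[of x] by (simp add: \<phi>_def P_def sum_divide_distrib[symmetric])
    show hs: "((\<lambda>a. \<phi> a x) has_sum 1) UNIV"
      using fin sum_one support by (intro has_sum_finite_neutralI) auto
    show "0 \<le> \<phi> a x" using nonneg P_pos[of x] by (simp add: \<phi>_def)
    show "\<phi> a x \<le> 1"
    proof (cases "\<psi> a x = 0")
      case False
      then have "\<psi> a x \<le> P x" unfolding P_def using fin nonneg by (intro member_le_sum) auto
      then show ?thesis using P_pos[of x] by (simp add: \<phi>_def)
    qed (simp add: \<phi>_def)
  qed
  ultimately show ?thesis using that support by blast
qed

lemma locally_finite_family_cutoff_half_Sup:
  fixes \<xi> :: "'a \<Rightarrow> 'x::topological_space \<Rightarrow> real"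
  assumes pu: "partition_of_unity \<xi>"
  shows "locally_finite_family (\<lambda>a x. max 0 (\<xi> a x - (SUP b. \<xi> b x) / 2))"
  unfolding locally_finite_family_def
proof
  fix x0
  define s where "s x = (SUP a. \<xi> a x)" for x
  have s_pos: "0 < s x0" unfolding s_def by (rule partition_of_unity_Sup_pos[OF pu])
  obtain F W2 where W2: "finite F" "open W2" "x0 \<in> W2" "\<forall>x\<in>W2. \<forall>b. b \<notin> F \<longrightarrow> \<xi> b x < s x0 / 4"
    using partition_of_unity_small_off_finite[OF pu, of "s x0 / 4" x0] s_pos by auto
  obtain W1 where W1: "open W1" "x0 \<in> W1" "\<forall>x\<in>W1. \<bar>s x - s x0\<bar> < s x0 / 2"
    using continuous_on_partition_of_unity_Sup[OF pu, unfolded continuous_on_UNIV_real_iff,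
        rule_format, of "s x0 / 2" x0] s_pos
    by (auto simp: s_def)
  have "max 0 (\<xi> b x - s x / 2) = 0" if "x \<in> W1 \<inter> W2" "b \<notin> F" for x b
  proof -
    have "s x0 / 2 < s x" using W1(3) that(1) unfolding abs_diff_less_iff by auto
    moreover have "\<xi> b x < s x0 / 4" using W2(4) that by blast
    ultimately show ?thesis by simp
  qed
  then show "\<exists>W F. open W \<and> x0 \<in> W \<and> finite F \<and>
      (\<forall>x\<in>W. \<forall>a. a \<notin> F \<longrightarrow> max 0 (\<xi> a x - (SUP b. \<xi> b x) / 2) = 0)"
    using W1 W2 unfolding s_def by (intro exI[of _ "W1 \<inter> W2"] exI[of _ F]) auto
qed

lemma partition_of_unity_locally_finite_refinement:
  fixes \<xi> :: "'a \<Rightarrow> 'x::topological_space \<Rightarrow> real"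
  assumes pu: "partition_of_unity \<xi>"
  obtains \<phi> where "partition_of_unity \<phi>" "locally_finite_family \<phi>"
    "\<And>a x. \<phi> a x \<noteq> 0 \<Longrightarrow> \<xi> a x \<noteq> 0"
proof -
  define s where "s x = (SUP a. \<xi> a x)" for x
  have s_pos: "0 < s x" for x unfolding s_def by (rule partition_of_unity_Sup_pos[OF pu])
  define \<psi> where "\<psi> a x = max 0 (\<xi> a x - s x / 2)" for a x
  have \<psi>_cont: "continuous_on UNIV (\<psi> a)" for a
    unfolding \<psi>_def[abs_def] s_def using pu continuous_on_partition_of_unity_Sup[OF pu]
    by (intro continuous_on_max continuous_on_const continuous_on_diff continuous_on_divide)
      (auto simp: partition_of_unity_def)
  have \<psi>_nonneg: "0 \<le> \<psi> a x" for a x by (simp add: \<psi>_def)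
  have \<psi>_lf: "locally_finite_family \<psi>"
    using locally_finite_family_cutoff_half_Sup[OF pu] unfolding \<psi>_def[abs_def] s_def .
  have \<psi>_pos: "\<exists>a. 0 < \<psi> a x" for x
  proof -
    have "s x / 2 < (SUP a. \<xi> a x)" using s_pos[of x] by (simp add: s_def)
    then obtain a where "s x / 2 < \<xi> a x"
      using less_cSUP_iff[OF UNIV_not_empty bdd_above_partition_of_unity[OF pu]] by blast
    then show ?thesis unfolding \<psi>_def by (intro exI[of _ a]) auto
  qed
  obtain \<phi> where \<phi>: "partition_of_unity \<phi>" "locally_finite_family \<phi>"
    "\<And>a x. \<phi> a x \<noteq> 0 \<Longrightarrow> \<psi> a x \<noteq> 0"
    using locally_finite_family_normalize[OF \<psi>_cont \<psi>_nonneg \<psi>_lf \<psi>_pos] by blast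
  moreover have "\<psi> a x \<noteq> 0 \<Longrightarrow> \<xi> a x \<noteq> 0" for a x
    using s_pos[of x] by (auto simp: \<psi>_def max_def split: if_splits)
  ultimately show ?thesis using that by blast
qed

section \<open>Partitions of unity give selections\<close>

lemma lists_lepoll_self:
  assumes "infinite (UNIV :: 'a set)"
  shows "(UNIV :: 'a list set) \<lesssim> (UNIV :: 'a set)"
proof -
  obtain a0 :: 'a where True by blast
  have "(UNIV :: 'a set) \<times> (UNIV :: 'a set) \<approx> (UNIV :: 'a set)"
    unfolding eqpoll_iff_card_of_ordIso by (rule card_of_Times_same_infinite[OF assms])
  also have "(UNIV :: 'a set) \<approx> UNIV - {a0}"
    using infinite_insert_eqpoll[of "UNIV - {a0}" a0] assms by (simp add: insert_absorb)
  finally obtain i :: "'a \<times> 'a \<Rightarrow> 'a" where i: "bij_betw i (UNIV \<times> UNIV) (UNIV - {a0})"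
    unfolding eqpoll_def by blast
  then have "inj i" "a0 \<notin> range i" by (auto simp: bij_betw_def)
  \<comment> \<open>code a list as iterated pairs, with the point a0 missed by i coding the empty list\<close>
  define E where "E xs = foldr (\<lambda>x r. i (x, r)) xs a0" for xs
  have "E xs = E ys \<Longrightarrow> xs = ys" for xs ys
  proof (induction xs arbitrary: ys)
    case Nil
    then show ?case using \<open>a0 \<notin> range i\<close> by (cases ys) (auto simp: E_def)
  next
    case (Cons x xs)
    then show ?case using \<open>a0 \<notin> range i\<close> \<open>inj i\<close> by (cases ys; auto simp: E_def inj_eq; metis rangeI)
  qed
  then have "inj E" by (rule injI)
  then show ?thesis unfolding lepoll_def by blast
qed

definition rat_alist_fun :: "('a \<times> rat) list \<Rightarrow> 'a \<Rightarrow> real" where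
  "rat_alist_fun l b = (case map_of l b of None \<Rightarrow> 0 | Some q \<Rightarrow> of_rat q)"

lemma rat_alist_fun_c00: "rat_alist_fun l \<in> c00"
  unfolding c00_def rat_alist_fun_def
  by (auto intro: finite_subset[OF _ finite_dom_map_of] split: option.splits)

lemma rat_alist_fun_dense:
  assumes y: "y \<in> ell1" and r: "r > 0"
  shows "\<exists>l. l1dist (rat_alist_fun l) y < r"
proof -
  obtain F where F: "finite F" "dist (\<Sum>a\<in>F. \<bar>y a\<bar>) (l1norm y) \<le> r/4"
    using infsum_finite_approximation[of "\<lambda>a. \<bar>y a\<bar>" UNIV "r/4"] y r
    unfolding l1norm_def ell1_def by auto
  define c where "c = r / (4 * (real (card F) + 1))"
  have "c > 0" using r unfolding c_def by (simp add: add_pos_nonneg)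
  have "\<exists>q::rat. \<bar>of_rat q - y a\<bar> < c" for a
  proof -
    obtain q where "y a - c < of_rat q" "of_rat q < y a + c"
      using of_rat_dense[of "y a - c" "y a + c"] \<open>c > 0\<close> by auto
    then show ?thesis by (intro exI[of _ q]) (simp add: abs_diff_less_iff)
  qed
  then obtain t where t: "\<And>a. \<bar>of_rat (t a) - y a\<bar> < c" by metis
  obtain xs where xs: "set xs = F" using finite_list[OF F(1)] by blast
  define l where "l = map (\<lambda>a. (a, t a)) xs"
  have l: "rat_alist_fun l b = (if b \<in> F then of_rat (t b) else 0)" for b
    by (simp add: rat_alist_fun_def l_def map_of_map_restrict restrict_map_def xs)
  have "l1dist (rat_alist_fun l) y \<le>
      (\<Sum>a\<in>F. \<bar>rat_alist_fun l a - y a\<bar>) + (l1norm y - (\<Sum>a\<in>F. \<bar>y a\<bar>))"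
    unfolding l1dist_def by (rule l1norm_diff_le_finite_support[OF y F(1)]) (simp add: l)
  also have "(\<Sum>a\<in>F. \<bar>rat_alist_fun l a - y a\<bar>) \<le> (\<Sum>a\<in>F. c)"
    by (intro sum_mono) (simp add: l less_imp_le[OF t])
  also have "\<dots> \<le> (real (card F) + 1) * c" using \<open>c > 0\<close> by simp
  also have "\<dots> = r/4"
    unfolding c_def using of_nat_0_le_iff[of "card F"] by (simp add: field_simps del: of_nat_0_le_iff)
  also have "l1norm y - (\<Sum>a\<in>F. \<bar>y a\<bar>) \<le> r/4"
    using F(2) unfolding dist_real_def by linarith
  finally show ?thesis using r by (intro exI[of _ l]) simp
qed

lemma dense_c00_family:
  assumes "infinite (UNIV :: 'a set)"
  shows "\<exists>d :: 'a \<Rightarrow> 'a \<Rightarrow> real. (\<forall>\<alpha>. d \<alpha> \<in> c00) \<and> (\<forall>y\<in>ell1. \<forall>r>0. \<exists>\<alpha>. l1dist (d \<alpha>) y < r)"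
proof -
  have "(UNIV :: rat set) \<lesssim> (UNIV :: nat set)"
    unfolding lepoll_def by (auto intro: inj_to_nat)
  also have "(UNIV :: nat set) \<lesssim> (UNIV :: 'a set)" using assms infinite_le_lepoll by blast
  finally have "(UNIV :: 'a set) \<times> (UNIV :: rat set) \<lesssim> (UNIV :: 'a set) \<times> (UNIV :: 'a set)"
    by (rule times_lepoll_mono[OF lepoll_refl])
  then have "(UNIV :: ('a \<times> rat) set) \<lesssim> (UNIV :: ('a \<times> 'a) set)" by simp
  also have "(UNIV :: ('a \<times> 'a) set) \<approx> (UNIV :: 'a set)"
    using card_of_Times_same_infinite[OF assms] by (simp add: eqpoll_iff_card_of_ordIso)
  finally have "lists (UNIV :: ('a \<times> rat) set) \<lesssim> lists (UNIV :: 'a set)"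
    by (rule lists_lepoll_mono)
  also have "\<dots> \<lesssim> (UNIV :: 'a set)" using lists_lepoll_self[OF assms] by simp
  finally obtain g :: "'a \<Rightarrow> ('a \<times> rat) list" where "surj g"
    unfolding lepoll_iff by auto
  have "\<exists>\<alpha>. l1dist (rat_alist_fun (g \<alpha>)) y < r" if "y \<in> ell1" "r > 0" for y r
    using rat_alist_fun_dense[OF that] \<open>surj g\<close> by (metis surjD)
  then show ?thesis using rat_alist_fun_c00 by blast
qed

lemma continuous_map_l1top_locally_finite_combination:
  fixes \<phi> :: "'i \<Rightarrow> 'x::topological_space \<Rightarrow> real" and d :: "'i \<Rightarrow> 'a \<Rightarrow> real"
  assumes Y: "Y \<subseteq> ell1" and cont: "\<And>\<alpha>. continuous_on UNIV (\<phi> \<alpha>)"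
    and lf: "locally_finite_family \<phi>" and d: "\<And>\<alpha>. d \<alpha> \<in> ell1"
    and fY: "\<And>x. (\<lambda>b. \<Sum>\<alpha>\<in>{\<alpha>. \<phi> \<alpha> x \<noteq> 0}. \<phi> \<alpha> x * d \<alpha> b) \<in> Y"
  shows "continuous_map euclidean (l1top Y) (\<lambda>x b. \<Sum>\<alpha>\<in>{\<alpha>. \<phi> \<alpha> x \<noteq> 0}. \<phi> \<alpha> x * d \<alpha> b)"
    (is "continuous_map _ _ ?f")
  unfolding continuous_map_l1top_iff[OF Y]
proof (intro conjI allI impI fY)
  fix x0 and e :: real assume "e > 0"
  obtain W F where W: "open W" "x0 \<in> W" "finite F" "\<And>x \<alpha>. x \<in> W \<Longrightarrow> \<alpha> \<notin> F \<Longrightarrow> \<phi> \<alpha> x = 0"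
    using locally_finite_familyE[OF lf, where p=x0] by blast
  have f_local: "?f x = (\<lambda>b. \<Sum>\<alpha>\<in>F. \<phi> \<alpha> x * d \<alpha> b)" if "x \<in> W" for x
    using W that by (intro ext sum.mono_neutral_left) auto
  define h where "h x = (\<Sum>\<alpha>\<in>F. \<bar>\<phi> \<alpha> x0 - \<phi> \<alpha> x\<bar> * l1norm (d \<alpha>))" for x
  have "continuous_on UNIV h"
    unfolding h_def by (intro continuous_intros cont)
  then obtain W' where W': "open W'" "x0 \<in> W'" "\<forall>x\<in>W'. \<bar>h x - h x0\<bar> < e"
    using \<open>e > 0\<close> unfolding continuous_on_UNIV_real_iff by blast
  have "l1dist (?f x0) (?f x) < e" if "x \<in> W \<inter> W'" for x
  proof -
    have "l1dist (?f x0) (?f x) = l1norm (\<lambda>b. \<Sum>\<alpha>\<in>F. (\<phi> \<alpha> x0 - \<phi> \<alpha> x) * d \<alpha> b)"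
      using f_local[of x0] f_local[of x] W(2) that
      by (simp add: l1dist_def sum_subtractf[symmetric] left_diff_distrib)
    also have "\<dots> \<le> h x" unfolding h_def by (rule l1norm_weighted_sum_le[OF W(3) d])
    also have "h x < e"
    proof -
      have "\<bar>h x - h x0\<bar> < e" using W' that by blast
      moreover have "h x0 = 0" "0 \<le> h x" unfolding h_def by (auto intro!: sum_nonneg simp: l1norm_nonneg)
      ultimately show ?thesis by simp
    qed
    finally show ?thesis .
  qed
  with W W' show "\<exists>W. open W \<and> x0 \<in> W \<and> (\<forall>x\<in>W. l1dist (?f x0) (?f x) < e)"
    by (intro exI[of _ "W \<inter> W'"]) auto
qed

lemma is_eps_selection_locally_finite_combination:
  assumes \<Phi>: "convex_lsc_mapping \<Phi> Y" and Y: "Y \<subseteq> ell1"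
    and \<phi>: "partition_of_unity \<phi>" "locally_finite_family \<phi>" and d: "\<And>\<alpha>. d \<alpha> \<in> ell1"
    and near: "\<And>\<alpha> x. \<phi> \<alpha> x \<noteq> 0 \<Longrightarrow> \<exists>y\<in>\<Phi> x. l1dist (d \<alpha>) y < \<epsilon>"
  shows "is_eps_selection \<epsilon> \<Phi> (\<lambda>x b. \<Sum>\<alpha>\<in>{\<alpha>. \<phi> \<alpha> x \<noteq> 0}. \<phi> \<alpha> x * d \<alpha> b)"
  unfolding is_eps_selection_def
proof
  fix x
  define S where "S = {\<alpha>. \<phi> \<alpha> x \<noteq> 0}"
  have fin: "finite S" unfolding S_def by (rule locally_finite_family_finite_support[OF \<phi>(2)])
  have "\<forall>\<alpha>\<in>S. \<exists>y. y \<in> \<Phi> x \<and> l1dist (d \<alpha>) y < \<epsilon>" using near unfolding S_def by blast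
  from bchoice[OF this] obtain y where y: "\<forall>\<alpha>\<in>S. y \<alpha> \<in> \<Phi> x \<and> l1dist (d \<alpha>) (y \<alpha>) < \<epsilon>"
    by blast
  have w: "\<forall>\<alpha>\<in>S. 0 \<le> \<phi> \<alpha> x" "sum (\<lambda>\<alpha>. \<phi> \<alpha> x) S = 1"
    using \<phi>(1) partition_of_unity_support_sum[OF \<phi>(1) fin[unfolded S_def]]
    by (auto simp: S_def partition_of_unity_def)
  then have "S \<noteq> {}" by auto
  with y have "(\<lambda>b. \<Sum>\<alpha>\<in>S. \<phi> \<alpha> x * y \<alpha> b) \<in> \<Phi> x"
    by (intro convex_fun_set_sum[OF convex_lsc_mappingD(3)[OF \<Phi>] fin _ w]) auto
  moreover have "l1dist (\<lambda>b. \<Sum>\<alpha>\<in>S. \<phi> \<alpha> x * d \<alpha> b) (\<lambda>b. \<Sum>\<alpha>\<in>S. \<phi> \<alpha> x * y \<alpha> b) < \<epsilon>"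
    using y d convex_lsc_mappingD(2)[OF \<Phi>] Y by (intro l1dist_convex_combination_less[OF fin w]) blast
  ultimately show "\<exists>z\<in>\<Phi> x. l1dist (\<lambda>b. \<Sum>\<alpha>\<in>{\<alpha>. \<phi> \<alpha> x \<noteq> 0}. \<phi> \<alpha> x * d \<alpha> b) z < \<epsilon>"
    unfolding S_def by blast
qed

lemma has_cont_eps_selections_if_partitions_of_unity:
  assumes inf: "infinite (UNIV :: 'a set)" and Y: "c00 \<subseteq> Y" "Y \<subseteq> (ell1 :: ('a \<Rightarrow> real) set)"
    and pu: "\<forall>U :: 'a \<Rightarrow> 'x::topological_space set. (\<forall>a. open (U a)) \<and> (\<Union>a. U a) = UNIV \<longrightarrow>
      (\<exists>\<xi>. partition_of_unity \<xi> \<and> index_subordinated \<xi> U)"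
  shows "has_cont_eps_selections Y TYPE('x)"
  unfolding has_cont_eps_selections_def
proof (intro allI impI)
  fix \<Phi> :: "'x \<Rightarrow> ('a \<Rightarrow> real) set" and \<epsilon> :: real
  assume \<Phi>: "convex_lsc_mapping \<Phi> Y" and "\<epsilon> > 0"
  interpret Metric_space Y l1dist by (rule Metric_space_l1dist[OF Y(2)])
  obtain d :: "'a \<Rightarrow> 'a \<Rightarrow> real" where d: "\<And>\<alpha>. d \<alpha> \<in> c00"
    and dense: "\<And>y r. y \<in> ell1 \<Longrightarrow> r > 0 \<Longrightarrow> \<exists>\<alpha>. l1dist (d \<alpha>) y < r"
    using dense_c00_family[OF inf] by blast
  have d_ell1: "d \<alpha> \<in> ell1" for \<alpha> using d c00_subset_ell1 by blast
  define U where "U \<alpha> = {x. \<Phi> x \<inter> mball (d \<alpha>) \<epsilon> \<noteq> {}}" for \<alpha>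
  have "open (U \<alpha>)" for \<alpha>
    unfolding U_def by (rule convex_lsc_mappingD(4)[OF \<Phi>]) (simp add: l1top_def openin_mball)
  moreover have "\<exists>\<alpha>. x \<in> U \<alpha>" for x
  proof -
    obtain y where y: "y \<in> \<Phi> x" using convex_lsc_mappingD(1)[OF \<Phi>] by blast
    then have "y \<in> Y" using convex_lsc_mappingD(2)[OF \<Phi>] by blast
    then obtain \<alpha> where "l1dist (d \<alpha>) y < \<epsilon>" using dense[of y \<epsilon>] Y(2) \<open>\<epsilon> > 0\<close> by blast
    with \<open>y \<in> Y\<close> d Y(1) have "y \<in> mball (d \<alpha>) \<epsilon>" by (auto simp: in_mball)
    with y show ?thesis unfolding U_def by blast
  qed
  ultimately obtain \<xi> where \<xi>: "partition_of_unity \<xi>" "index_subordinated \<xi> U"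
    using pu[rule_format, of U] by blast
  obtain \<phi> where \<phi>: "partition_of_unity \<phi>" "locally_finite_family \<phi>"
    and \<phi>\<xi>: "\<And>\<alpha> x. \<phi> \<alpha> x \<noteq> 0 \<Longrightarrow> \<xi> \<alpha> x \<noteq> 0"
    using partition_of_unity_locally_finite_refinement[OF \<xi>(1)] by blast
  have \<phi>U: "x \<in> U \<alpha>" if "\<phi> \<alpha> x \<noteq> 0" for \<alpha> x
    using \<xi>(2) \<phi>\<xi>[OF that] unfolding index_subordinated_def by blast
  define f where "f x = (\<lambda>b. \<Sum>\<alpha>\<in>{\<alpha>. \<phi> \<alpha> x \<noteq> 0}. \<phi> \<alpha> x * d \<alpha> b)" for x
  have fin: "finite {\<alpha>. \<phi> \<alpha> x \<noteq> 0}" for x by (rule locally_finite_family_finite_support[OF \<phi>(2)])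
  have "f x \<in> Y" for x
  proof -
    have "f x \<in> c00" unfolding f_def by (rule c00_weighted_sum[OF fin d])
    then show ?thesis using Y(1) by blast
  qed
  then have "continuous_map euclidean (l1top Y) f"
    unfolding f_def[abs_def] using \<phi>(1)
    by (intro continuous_map_l1top_locally_finite_combination[OF Y(2) _ \<phi>(2) d_ell1])
      (auto simp: partition_of_unity_def f_def)
  moreover have "is_eps_selection \<epsilon> \<Phi> f"
    unfolding f_def[abs_def]
  proof (rule is_eps_selection_locally_finite_combination[OF \<Phi> Y(2) \<phi> d_ell1])
    fix \<alpha> x assume "\<phi> \<alpha> x \<noteq> 0"
    then obtain y where "y \<in> \<Phi> x" "y \<in> mball (d \<alpha>) \<epsilon>" using \<phi>U unfolding U_def by blast
    then show "\<exists>y\<in>\<Phi> x. l1dist (d \<alpha>) y < \<epsilon>" by (auto simp: in_mball)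
  qed
  ultimately show "\<exists>f. continuous_map euclidean (l1top Y) f \<and> is_eps_selection \<epsilon> \<Phi> f" by blast
qed

section \<open>Selections give partitions of unity\<close>

lemma has_cont_eps_selections_sequence:
  fixes \<Psi> :: "'x::topological_space \<Rightarrow> ('a \<Rightarrow> real) set"
  assumes Y: "Y \<subseteq> ell1" and H: "has_cont_eps_selections Y TYPE('x)"
    and \<Psi>: "convex_lsc_mapping \<Psi> Y"
  shows "\<exists>f. (\<forall>n. continuous_map euclidean (l1top Y) (f n)) \<and>
    (\<forall>n x. \<exists>y\<in>\<Psi> x. l1dist (f n x) y < (1/2)^n) \<and>
    (\<forall>n x. l1dist (f n x) (f (Suc n) x) \<le> 2 * (1/2)^n)"
proof -
  define e :: "nat \<Rightarrow> real" where "e n = (1/2)^n" for n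
  have sel: "\<exists>f. continuous_map euclidean (l1top Y) f \<and> is_eps_selection (e n) \<Phi> f"
    if "convex_lsc_mapping \<Phi> Y" for \<Phi> :: "'x \<Rightarrow> ('a \<Rightarrow> real) set" and n
    using H that unfolding has_cont_eps_selections_def e_def by simp
  define P where "P n p \<longleftrightarrow> convex_lsc_mapping (fst p) Y \<and> (\<forall>x. fst p x \<subseteq> \<Psi> x) \<and>
      continuous_map euclidean (l1top Y) (snd p) \<and> is_eps_selection (e n) (fst p) (snd p)"
    for n and p :: "('x \<Rightarrow> ('a \<Rightarrow> real) set) \<times> ('x \<Rightarrow> 'a \<Rightarrow> real)"
  define Q where "Q n p p' \<longleftrightarrow> (\<forall>x. fst p' x \<subseteq> {y \<in> fst p x. l1dist (snd p x) y < e n})"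
    for n and p p' :: "('x \<Rightarrow> ('a \<Rightarrow> real) set) \<times> ('x \<Rightarrow> 'a \<Rightarrow> real)"
  have "\<exists>p. P 0 p"
    using sel[OF \<Psi>, of 0] \<Psi> unfolding P_def by auto
  moreover have "\<exists>p'. P (Suc n) p' \<and> Q n p p'" if "P n p" for n p
  proof -
    define \<Phi>' where "\<Phi>' x = {y \<in> fst p x. l1dist (snd p x) y < e n}" for x
    have "convex_lsc_mapping \<Phi>' Y"
      unfolding \<Phi>'_def using that by (intro convex_lsc_mapping_restrict[OF Y]) (auto simp: P_def)
    with sel obtain f' where "continuous_map euclidean (l1top Y) f'" "is_eps_selection (e (Suc n)) \<Phi>' f'"
      by blast
    moreover have "\<Phi>' x \<subseteq> \<Psi> x" for x using that by (auto simp: P_def \<Phi>'_def)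
    ultimately have "P (Suc n) (\<Phi>', f') \<and> Q n p (\<Phi>', f')"
      using \<open>convex_lsc_mapping \<Phi>' Y\<close> by (simp add: P_def Q_def \<Phi>'_def)
    then show ?thesis by blast
  qed
  ultimately obtain p where p: "\<And>n. P n (p n)" "\<And>n. Q n (p n) (p (Suc n))"
    using dependent_nat_choice[of P Q] by blast
  define f where "f n = snd (p n)" for n
  have f_ell1: "f n x \<in> ell1" for n x
    using p(1)[of n] Y unfolding P_def f_def continuous_map_l1top_iff[OF Y] by blast
  have "l1dist (f n x) (f (Suc n) x) \<le> 2 * e n" for n x
  proof -
    obtain y where y: "y \<in> fst (p (Suc n)) x" "l1dist (f (Suc n) x) y < e (Suc n)"
      using p(1)[of "Suc n"] unfolding P_def is_eps_selection_def f_def by blast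
    then have "y \<in> fst (p n) x" "l1dist (f n x) y < e n"
      using p(2)[of n] unfolding Q_def f_def by auto
    then have "y \<in> ell1" using p(1)[of n] Y unfolding P_def convex_lsc_mapping_def by blast
    have "l1dist (f n x) (f (Suc n) x) \<le> l1dist (f n x) y + l1dist y (f (Suc n) x)"
      by (rule l1dist_triangle[OF f_ell1 \<open>y \<in> ell1\<close> f_ell1])
    also have "\<dots> \<le> 2 * e n"
      using \<open>l1dist (f n x) y < e n\<close> y(2) l1dist_commute[of y "f (Suc n) x"]
        l1dist_nonneg[of "f (Suc n) x" y] by (simp add: e_def)
    finally show ?thesis .
  qed
  moreover have "\<exists>y\<in>\<Psi> x. l1dist (f n x) y < e n" for n x
    using p(1)[of n] unfolding P_def is_eps_selection_def f_def by blast
  moreover have "continuous_map euclidean (l1top Y) (f n)" for n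
    using p(1)[of n] unfolding P_def f_def by blast
  ultimately show ?thesis unfolding e_def by blast
qed

lemma l1dist_geometric_tail:
  assumes ell1: "\<And>n. u n \<in> ell1" and step: "\<And>n. l1dist (u n) (u (Suc n)) \<le> 2 * (1/2)^n"
    and "n \<le> m"
  shows "l1dist (u n) (u m) \<le> 4 * (1/2)^n"
proof -
  have "l1dist (u n) (u (n + j)) \<le> 4 * (1/2)^n - 4 * (1/2)^(n + j)" for j
  proof (induction j)
    case 0
    then show ?case by (simp add: l1dist_def l1norm_def)
  next
    case (Suc j)
    have "l1dist (u n) (u (n + Suc j)) \<le> l1dist (u n) (u (n + j)) + l1dist (u (n + j)) (u (Suc (n + j)))"
      using l1dist_triangle[OF ell1 ell1 ell1] by simp
    also have "\<dots> \<le> 4 * (1/2)^n - 4 * (1/2)^(n + Suc j)"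
      using Suc.IH step[of "n + j"] by simp
    finally show ?case .
  qed
  from this[of "m - n"] \<open>n \<le> m\<close> have "l1dist (u n) (u m) \<le> 4 * (1/2)^n - 4 * (1/2)^m" by simp
  moreover have "(0::real) \<le> (1/2)^m" by simp
  ultimately show ?thesis by linarith
qed

lemma exists_geometric_less:
  assumes "\<eta> > 0" "c > 0"
  shows "\<exists>N. c * (1/2::real)^N < \<eta>"
proof -
  obtain N where "(1/2::real)^N < \<eta> / c" using real_arch_pow_inv[of "\<eta> / c" "1/2"] assms by auto
  then show ?thesis using assms by (intro exI[of _ N]) (simp add: field_simps)
qed

lemma l1dist_geometric_Cauchy_coordinate:
  assumes ell1: "\<And>n. u n \<in> ell1" and step: "\<And>n. l1dist (u n) (u (Suc n)) \<le> 2 * (1/2)^n"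
  shows "Cauchy (\<lambda>n. u n a)"
proof (rule metric_CauchyI)
  fix \<eta> :: real assume "\<eta> > 0"
  then obtain N where N: "8 * (1/2::real)^N < \<eta>" using exists_geometric_less[of \<eta> 8] by auto
  have close: "dist (u m a) (u N a) \<le> 4 * (1/2)^N" if "N \<le> m" for m
    using abs_diff_le_l1dist[OF ell1[of N] ell1[of m], of a] l1dist_geometric_tail[OF ell1 step that]
    by (simp add: dist_real_def abs_minus_commute)
  then have "dist (u m a) (u n a) < \<eta>" if "N \<le> m" "N \<le> n" for m n
    using dist_triangle2[of "u m a" "u n a" "u N a"] close[OF that(1)] close[OF that(2)] N by linarith
  then show "\<exists>M. \<forall>m\<ge>M. \<forall>n\<ge>M. dist (u m a) (u n a) < \<eta>" by blast
qed

lemma l1_geometric_sequence_coordinate_limit: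
  fixes f :: "nat \<Rightarrow> 'x::topological_space \<Rightarrow> 'a \<Rightarrow> real"
  assumes Y: "Y \<subseteq> ell1" and cont: "\<And>n. continuous_map euclidean (l1top Y) (f n)"
    and step: "\<And>n x. l1dist (f n x) (f (Suc n) x) \<le> 2 * (1/2)^n"
  shows "\<exists>\<xi> :: 'a \<Rightarrow> 'x \<Rightarrow> real. (\<forall>a. continuous_on UNIV (\<xi> a)) \<and>
    (\<forall>n x G. finite G \<longrightarrow> (\<Sum>a\<in>G. \<bar>f n x a - \<xi> a x\<bar>) \<le> 4 * (1/2)^n)"
proof -
  have ell1: "f n x \<in> ell1" for n x
    using cont[of n] Y unfolding continuous_map_l1top_iff[OF Y] by blast
  have tail: "l1dist (f n x) (f m x) \<le> 4 * (1/2)^n" if "n \<le> m" for n m x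
    using l1dist_geometric_tail[of "\<lambda>n. f n x", OF ell1 step that] .
  have "Cauchy (\<lambda>n. f n x a)" for x a
    using ell1 step by (rule l1dist_geometric_Cauchy_coordinate)
  define \<xi> where "\<xi> a x = lim (\<lambda>n. f n x a)" for a x
  have lim: "(\<lambda>n. f n x a) \<longlonglongrightarrow> \<xi> a x" for a x
    unfolding \<xi>_def using \<open>Cauchy (\<lambda>n. f n x a)\<close> by (simp add: Cauchy_convergent_iff convergent_LIMSEQ_iff)
  have bound: "(\<Sum>a\<in>G. \<bar>f n x a - \<xi> a x\<bar>) \<le> 4 * (1/2)^n" if "finite G" for n x G
  proof (rule LIMSEQ_le_const2)
    show "(\<lambda>m. \<Sum>a\<in>G. \<bar>f n x a - f m x a\<bar>) \<longlonglongrightarrow> (\<Sum>a\<in>G. \<bar>f n x a - \<xi> a x\<bar>)"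
      by (intro tendsto_sum tendsto_rabs tendsto_diff tendsto_const lim)
    have "(\<Sum>a\<in>G. \<bar>f n x a - f m x a\<bar>) \<le> 4 * (1/2)^n" if "n \<le> m" for m
      using sum_abs_diff_le_l1dist[OF ell1[of n x] ell1[of m x] \<open>finite G\<close>] tail[OF that, of x] by linarith
    then show "\<exists>N. \<forall>m\<ge>N. (\<Sum>a\<in>G. \<bar>f n x a - f m x a\<bar>) \<le> 4 * (1/2)^n" by blast
  qed
  have "continuous_on UNIV (\<xi> a)" for a
    unfolding continuous_on_UNIV_real_iff
  proof (intro allI impI)
    fix x0 and \<eta> :: real assume "\<eta> > 0"
    then obtain n where n: "12 * (1/2::real)^n < \<eta>" using exists_geometric_less[of \<eta> 12] by auto
    obtain W where W: "open W" "x0 \<in> W" "\<forall>x\<in>W. \<bar>f n x a - f n x0 a\<bar> < \<eta>/3"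
      using continuous_on_coordinate[OF Y cont, of n a, unfolded continuous_on_UNIV_real_iff, rule_format,
          of "\<eta>/3" x0] \<open>\<eta> > 0\<close> by auto
    have bnd: "dist (f n x a) (\<xi> a x) \<le> 4 * (1/2)^n" for x
      using bound[of "{a}" n x] by (simp add: dist_real_def)
    have "dist (\<xi> a x) (\<xi> a x0) < \<eta>" if "x \<in> W" for x
    proof -
      have "dist (f n x a) (f n x0 a) < \<eta>/3" using W(3) that by (simp add: dist_real_def)
      then show ?thesis
        using dist_triangle[of "\<xi> a x" "\<xi> a x0" "f n x a"] dist_triangle[of "f n x a" "\<xi> a x0" "f n x0 a"]
          bnd[of x] bnd[of x0] dist_commute[of "\<xi> a x" "f n x a"] dist_commute[of "f n x0 a" "\<xi> a x0"] n
        by linarith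
    qed
    then have "\<bar>\<xi> a x - \<xi> a x0\<bar> < \<eta>" if "x \<in> W" for x
      using that by (simp add: dist_real_def)
    with W show "\<exists>W. open W \<and> x0 \<in> W \<and> (\<forall>x\<in>W. \<bar>\<xi> a x - \<xi> a x0\<bar> < \<eta>)" by blast
  qed
  with bound show ?thesis by blast
qed

lemma nonneg_has_sum_one_if_approx:
  fixes z :: "'a \<Rightarrow> real"
  assumes nonneg: "\<And>a. 0 \<le> z a"
    and approx: "\<And>\<eta>. \<eta> > 0 \<Longrightarrow> \<exists>y. (\<forall>a. 0 \<le> y a) \<and> (y has_sum 1) UNIV \<and>
      (\<forall>G. finite G \<longrightarrow> (\<Sum>a\<in>G. \<bar>z a - y a\<bar>) < \<eta>)"
  shows "(z has_sum 1) UNIV"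
  unfolding nonneg_has_sum_one_iff[OF nonneg]
proof (intro conjI allI impI)
  fix G :: "'a set" assume "finite G"
  show "sum z G \<le> 1"
  proof (rule field_le_epsilon)
    fix \<eta> :: real assume "\<eta> > 0"
    then obtain y where y: "\<forall>a. 0 \<le> y a" "(y has_sum 1) UNIV" "(\<Sum>a\<in>G. \<bar>z a - y a\<bar>) < \<eta>"
      using approx \<open>finite G\<close> by blast
    then have "sum y G \<le> 1" using nonneg_has_sum_one_iff[of y] \<open>finite G\<close> by blast
    moreover have "sum z G - sum y G \<le> (\<Sum>a\<in>G. \<bar>z a - y a\<bar>)"
      unfolding sum_subtractf[symmetric] by (intro sum_mono) simp
    ultimately show "sum z G \<le> 1 + \<eta>" using y(3) by linarith
  qed
next
  fix \<delta> :: real assume "\<delta> > 0"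
  then obtain y where y: "\<forall>a. 0 \<le> y a" "(y has_sum 1) UNIV"
    "\<forall>G. finite G \<longrightarrow> (\<Sum>a\<in>G. \<bar>z a - y a\<bar>) < \<delta>/2"
    using approx[of "\<delta>/2"] by auto
  moreover have "\<delta>/2 > 0" using \<open>\<delta> > 0\<close> by simp
  ultimately obtain G where G: "finite G" "1 - \<delta>/2 < sum y G"
    using nonneg_has_sum_one_iff[of y] by blast
  have "sum y G - sum z G \<le> (\<Sum>a\<in>G. \<bar>z a - y a\<bar>)"
    unfolding sum_subtractf[symmetric] by (intro sum_mono) simp
  moreover have "(\<Sum>a\<in>G. \<bar>z a - y a\<bar>) < \<delta>/2" using G(1) y(3) by blast
  ultimately show "\<exists>G. finite G \<and> 1 - \<delta> < sum z G" using G by (intro exI[of _ G]) auto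
qed

definition supported_simplex :: "('a \<Rightarrow> 'x set) \<Rightarrow> 'x \<Rightarrow> ('a \<Rightarrow> real) set" where
  "supported_simplex U x = {y. (\<forall>a. 0 \<le> y a) \<and> (\<forall>a. x \<notin> U a \<longrightarrow> y a = 0) \<and> (y has_sum 1) UNIV}"

lemma supported_simplex_closed:
  assumes approx: "\<And>\<eta>. \<eta> > 0 \<Longrightarrow>
    \<exists>y\<in>supported_simplex U x. \<forall>G. finite G \<longrightarrow> (\<Sum>a\<in>G. \<bar>z a - y a\<bar>) < \<eta>"
  shows "z \<in> supported_simplex U x"
proof -
  have near: "\<exists>y\<in>supported_simplex U x. \<bar>z a - y a\<bar> < \<eta>" if "\<eta> > 0" for a \<eta>
  proof -
    obtain y where "y \<in> supported_simplex U x" "\<forall>G. finite G \<longrightarrow> (\<Sum>a\<in>G. \<bar>z a - y a\<bar>) < \<eta>"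
      using approx[OF \<open>\<eta> > 0\<close>] by blast
    then show ?thesis by (intro bexI[of _ y]) (auto dest: spec[of _ "{a}"])
  qed
  have nonneg: "0 \<le> z a" for a
  proof (rule field_le_epsilon)
    fix \<eta> :: real assume "\<eta> > 0"
    then obtain y where "y \<in> supported_simplex U x" "\<bar>z a - y a\<bar> < \<eta>" using near by blast
    then have "0 \<le> y a" "y a - \<eta> < z a" unfolding supported_simplex_def abs_diff_less_iff by auto
    then show "0 \<le> z a + \<eta>" by linarith
  qed
  have "z a = 0" if "x \<notin> U a" for a
  proof -
    have "\<bar>z a\<bar> \<le> 0 + \<eta>" if "\<eta> > 0" for \<eta>
    proof -
      obtain y where "y \<in> supported_simplex U x" "\<bar>z a - y a\<bar> < \<eta>" using near \<open>\<eta> > 0\<close> by blast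
      with \<open>x \<notin> U a\<close> show ?thesis unfolding supported_simplex_def by simp
    qed
    then show ?thesis using field_le_epsilon[of "\<bar>z a\<bar>" 0] by simp
  qed
  moreover have "(z has_sum 1) UNIV"
  proof (rule nonneg_has_sum_one_if_approx[OF nonneg])
    fix \<eta> :: real assume "\<eta> > 0"
    then obtain y where "y \<in> supported_simplex U x" "\<forall>G. finite G \<longrightarrow> (\<Sum>a\<in>G. \<bar>z a - y a\<bar>) < \<eta>"
      using approx by blast
    then show "\<exists>y. (\<forall>a. 0 \<le> y a) \<and> (y has_sum 1) UNIV \<and> (\<forall>G. finite G \<longrightarrow> (\<Sum>a\<in>G. \<bar>z a - y a\<bar>) < \<eta>)"
      unfolding supported_simplex_def by blast
  qed
  ultimately show ?thesis unfolding supported_simplex_def using nonneg by blast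
qed

lemma nonneg_has_sum_one_ell1:
  assumes "\<And>a. 0 \<le> y a" "(y has_sum 1) UNIV"
  shows "y \<in> ell1" "l1norm y = 1"
proof -
  have "((\<lambda>a. \<bar>y a\<bar>) has_sum 1) UNIV" using assms by simp
  then show "y \<in> ell1" "l1norm y = 1" unfolding ell1_def l1norm_def by (auto simp: has_sum_iff)
qed

lemma nonneg_has_sum_one_c00_approx:
  assumes nonneg: "\<And>a. 0 \<le> y a" and hs: "(y has_sum 1) UNIV" and "r > 0"
  shows "\<exists>z\<in>c00. (\<forall>a. 0 \<le> z a) \<and> (\<forall>a. z a \<noteq> 0 \<longrightarrow> y a \<noteq> 0) \<and> (z has_sum 1) UNIV \<and> l1dist y z < r"
proof -
  define \<delta> where "\<delta> = min (r/4) (1/2)"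
  have \<delta>: "\<delta> > 0" "\<delta> \<le> r/4" "\<delta> \<le> 1/2" unfolding \<delta>_def using \<open>r > 0\<close> by auto
  obtain F where F: "finite F" "dist (sum y F) 1 \<le> \<delta>"
    using has_sum_finite_approximation[OF hs \<delta>(1)] by blast
  define s where "s = sum y F"
  have "s \<le> 1" unfolding s_def using nonneg by (intro finite_sum_le_has_sum[OF hs F(1)]) auto
  have "1 - s \<le> \<delta>" using abs_le_D2[OF F(2)[unfolded dist_real_def]] by (simp add: s_def)
  then have "s > 0" using \<delta> by linarith
  define z where "z a = (if a \<in> F then y a / s else 0)" for a
  have "z \<in> c00" unfolding c00_def z_def using F(1) by (auto intro: finite_subset)
  moreover have z_nonneg: "\<forall>a. 0 \<le> z a" unfolding z_def using nonneg \<open>s > 0\<close> by simp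
  moreover have "\<forall>a. z a \<noteq> 0 \<longrightarrow> y a \<noteq> 0" unfolding z_def by simp
  moreover have z_sum: "sum z F = 1"
  proof -
    have "sum z F = (\<Sum>a\<in>F. y a / s)" by (rule sum.cong) (auto simp: z_def)
    also have "\<dots> = 1" using \<open>s > 0\<close> by (simp add: s_def sum_divide_distrib[symmetric])
    finally show ?thesis .
  qed
  then have "(z has_sum 1) UNIV" using F(1) by (intro has_sum_finite_neutralI[of F]) (auto simp: z_def)
  moreover have "l1dist y z < r"
  proof -
    have y: "y \<in> ell1" "l1norm y = 1" by (rule nonneg_has_sum_one_ell1[OF nonneg hs])+
    have z_ge: "y a \<le> z a" if "a \<in> F" for a
      using that nonneg[of a] \<open>s > 0\<close> \<open>s \<le> 1\<close> by (simp add: z_def le_divide_eq mult_left_le)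
    have "l1dist y z = l1norm (\<lambda>a. z a - y a)" by (simp add: l1dist_def l1norm_def abs_minus_commute)
    also have "\<dots> \<le> (\<Sum>a\<in>F. \<bar>z a - y a\<bar>) + (l1norm y - (\<Sum>a\<in>F. \<bar>y a\<bar>))"
      using F(1) by (intro l1norm_diff_le_finite_support[OF y(1)]) (auto simp: z_def)
    also have "(\<Sum>a\<in>F. \<bar>z a - y a\<bar>) = sum z F - s"
      using z_ge by (simp add: s_def sum_subtractf[symmetric])
    also have "(\<Sum>a\<in>F. \<bar>y a\<bar>) = s" using nonneg by (simp add: s_def)
    finally have "l1dist y z \<le> 2 * (1 - s)" using z_sum y(2) by simp
    moreover have "2 * (1 - s) < r"
      using \<open>1 - s \<le> \<delta>\<close> \<delta>(2) \<open>r > 0\<close> by (simp add: algebra_simps; linarith)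
    ultimately show ?thesis by linarith
  qed
  ultimately show ?thesis by blast
qed

lemma supported_simplex_lower_semicontinuous:
  fixes U :: "'a \<Rightarrow> 'x::topological_space set"
  assumes Y: "c00 \<subseteq> Y" "Y \<subseteq> ell1" and U: "\<And>a. open (U a)" and V: "openin (l1top Y) V"
  shows "open {x. Y \<inter> supported_simplex U x \<inter> V \<noteq> {}}"
proof (subst open_subopen, intro ballI)
  interpret Metric_space Y l1dist by (rule Metric_space_l1dist[OF Y(2)])
  fix x0 assume "x0 \<in> {x. Y \<inter> supported_simplex U x \<inter> V \<noteq> {}}"
  then obtain y where y: "y \<in> Y" "y \<in> supported_simplex U x0" "y \<in> V" by blast
  obtain r where r: "r > 0" "mball y r \<subseteq> V"
    using V y(3) unfolding l1top_def openin_mtopology by blast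
  obtain z where z: "z \<in> c00" "\<forall>a. 0 \<le> z a" "\<forall>a. z a \<noteq> 0 \<longrightarrow> y a \<noteq> 0" "(z has_sum 1) UNIV"
    "l1dist y z < r"
    using nonneg_has_sum_one_c00_approx[of y r] y(2) \<open>r > 0\<close> unfolding supported_simplex_def by blast
  define W where "W = (\<Inter>a\<in>{a. z a \<noteq> 0}. U a)"
  have "open W" unfolding W_def using z(1) U by (intro open_INT) (auto simp: c00_def)
  moreover have "x0 \<in> W" unfolding W_def using z(3) y(2) by (auto simp: supported_simplex_def)
  moreover have "z \<in> Y \<inter> supported_simplex U x \<inter> V" if "x \<in> W" for x
  proof -
    have "z \<in> Y" using z(1) Y(1) by blast
    moreover have "z \<in> supported_simplex U x"
      using that z(2,4) unfolding W_def supported_simplex_def by blast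
    moreover have "z \<in> V" using r(2) \<open>z \<in> Y\<close> y(1) z(5) by (auto simp: in_mball)
    ultimately show ?thesis by blast
  qed
  ultimately show "\<exists>T. open T \<and> x0 \<in> T \<and> T \<subseteq> {x. Y \<inter> supported_simplex U x \<inter> V \<noteq> {}}"
    by blast
qed

lemma convex_lsc_supported_simplex:
  fixes U :: "'a \<Rightarrow> 'x::topological_space set"
  assumes Y: "c00 \<subseteq> Y" "Y \<subseteq> ell1" "convex_fun_set Y"
    and U: "\<And>a. open (U a)" "\<And>x. \<exists>a. x \<in> U a"
  shows "convex_lsc_mapping (\<lambda>x. Y \<inter> supported_simplex U x) Y"
proof -
  have nonempty: "Y \<inter> supported_simplex U x \<noteq> {}" for x
  proof -
    obtain a0 where "x \<in> U a0" using U(2) by blast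
    define u where "u b = (if b = a0 then 1 else (0::real))" for b
    have "u \<in> c00" by (simp add: c00_def u_def)
    moreover have "(u has_sum 1) UNIV"
      by (intro has_sum_finite_neutralI[of "{a0}"]) (auto simp: u_def)
    ultimately have "u \<in> Y \<inter> supported_simplex U x"
      using Y(1) \<open>x \<in> U a0\<close> by (auto simp: supported_simplex_def u_def)
    then show ?thesis by blast
  qed
  have convex: "convex_fun_set (Y \<inter> supported_simplex U x)" for x
    unfolding convex_fun_set_def
  proof (intro ballI allI impI)
    fix y z and t :: real
    assume y: "y \<in> Y \<inter> supported_simplex U x" and z: "z \<in> Y \<inter> supported_simplex U x"
      and t: "0 \<le> t \<and> t \<le> 1"
    have "((\<lambda>a. t * y a + (1 - t) * z a) has_sum (t * 1 + (1 - t) * 1)) UNIV"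
      using y z by (intro has_sum_add has_sum_cmult_right) (auto simp: supported_simplex_def)
    then show "(\<lambda>a. t * y a + (1 - t) * z a) \<in> Y \<inter> supported_simplex U x"
      using convex_fun_setD[OF Y(3)] y z t by (auto simp: supported_simplex_def)
  qed
  show ?thesis
    unfolding convex_lsc_mapping_def
  proof (intro conjI allI impI)
    show "Y \<inter> supported_simplex U x \<noteq> {}" "Y \<inter> supported_simplex U x \<subseteq> Y"
      "convex_fun_set (Y \<inter> supported_simplex U x)" for x
      using nonempty convex by auto
    show "open {x. Y \<inter> supported_simplex U x \<inter> V \<noteq> {}}" if "openin (l1top Y) V" for V
      by (rule supported_simplex_lower_semicontinuous[OF Y(1,2) U(1) that])
  qed
qed

lemma partitions_of_unity_if_has_cont_eps_selections:
  assumes Y: "c00 \<subseteq> Y" "Y \<subseteq> (ell1 :: ('a \<Rightarrow> real) set)" "convex_fun_set Y"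
    and H: "has_cont_eps_selections Y TYPE('x::topological_space)"
  shows "\<forall>U :: 'a \<Rightarrow> 'x set. (\<forall>a. open (U a)) \<and> (\<Union>a. U a) = UNIV \<longrightarrow>
    (\<exists>\<xi>. partition_of_unity \<xi> \<and> index_subordinated \<xi> U)"
proof (intro allI impI)
  fix U :: "'a \<Rightarrow> 'x set" assume U: "(\<forall>a. open (U a)) \<and> (\<Union>a. U a) = UNIV"
  then have "convex_lsc_mapping (\<lambda>x. Y \<inter> supported_simplex U x) Y"
    by (intro convex_lsc_supported_simplex[OF Y]) auto
  then obtain f where f: "\<forall>n. continuous_map euclidean (l1top Y) (f n)"
    "\<forall>n x. \<exists>y\<in>Y \<inter> supported_simplex U x. l1dist (f n x) y < (1/2)^n"
    "\<forall>n x. l1dist (f n x) (f (Suc n) x) \<le> 2 * (1/2)^n"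
    using has_cont_eps_selections_sequence[OF Y(2) H] by blast
  then obtain \<xi> where \<xi>: "\<forall>a. continuous_on UNIV (\<xi> a)"
    "\<forall>n x G. finite G \<longrightarrow> (\<Sum>a\<in>G. \<bar>f n x a - \<xi> a x\<bar>) \<le> 4 * (1/2)^n"
    using l1_geometric_sequence_coordinate_limit[OF Y(2)] by blast
  have simplex: "(\<lambda>a. \<xi> a x) \<in> supported_simplex U x" for x
  proof (rule supported_simplex_closed)
    fix \<eta> :: real assume "\<eta> > 0"
    then obtain n where n: "5 * (1/2::real)^n < \<eta>" using exists_geometric_less[of \<eta> 5] by auto
    obtain y where y: "y \<in> Y" "y \<in> supported_simplex U x" "l1dist (f n x) y < (1/2)^n"
      using f(2) by blast
    have "(\<Sum>a\<in>G. \<bar>\<xi> a x - y a\<bar>) < \<eta>" if "finite G" for G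
    proof -
      have "(\<Sum>a\<in>G. \<bar>\<xi> a x - y a\<bar>) \<le> (\<Sum>a\<in>G. \<bar>f n x a - \<xi> a x\<bar>) + (\<Sum>a\<in>G. \<bar>f n x a - y a\<bar>)"
        unfolding sum.distrib[symmetric] by (intro sum_mono) linarith
      also have "(\<Sum>a\<in>G. \<bar>f n x a - y a\<bar>) \<le> l1dist (f n x) y"
        using f(1) y(1) Y(2) \<open>finite G\<close>
        by (intro sum_abs_diff_le_l1dist) (auto simp: continuous_map_l1top_iff[OF Y(2)])
      finally show ?thesis using \<xi>(2)[rule_format, of G n x] \<open>finite G\<close> y(3) n by linarith
    qed
    with y(2) show "\<exists>y\<in>supported_simplex U x. \<forall>G. finite G \<longrightarrow> (\<Sum>a\<in>G. \<bar>\<xi> a x - y a\<bar>) < \<eta>"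
      by blast
  qed
  then have nonneg: "0 \<le> \<xi> a x" and hs: "((\<lambda>a. \<xi> a x) has_sum 1) UNIV"
    and "\<xi> a x \<noteq> 0 \<Longrightarrow> x \<in> U a" for a x
    unfolding supported_simplex_def by auto
  moreover have "\<xi> a x \<le> 1" for a x
    using finite_sum_le_has_sum[OF hs, of "{a}"] nonneg by simp
  ultimately have "partition_of_unity \<xi> \<and> index_subordinated \<xi> U"
    using \<xi>(1) unfolding partition_of_unity_def index_subordinated_def by blast
  then show "\<exists>\<xi>. partition_of_unity \<xi> \<and> index_subordinated \<xi> U" by blast
qed

lemma has_cont_eps_selections_iff_partitions_of_unity:
  assumes "infinite (UNIV :: 'a set)" and "c00 \<subseteq> Y" "Y \<subseteq> (ell1 :: ('a \<Rightarrow> real) set)"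
    and "convex_fun_set Y"
  shows "has_cont_eps_selections Y TYPE('x::topological_space) \<longleftrightarrow>
    (\<forall>U :: 'a \<Rightarrow> 'x set. (\<forall>a. open (U a)) \<and> (\<Union>a. U a) = UNIV \<longrightarrow>
      (\<exists>\<xi>. partition_of_unity \<xi> \<and> index_subordinated \<xi> U))"
  using partitions_of_unity_if_has_cont_eps_selections[OF assms(2-4)]
    has_cont_eps_selections_if_partitions_of_unity[OF assms(1-3)] by blast

theorem theorem4p4:
  assumes "infinite (UNIV :: 'a set)"
  shows "(has_cont_eps_selections (c00 :: ('a \<Rightarrow> real) set) TYPE('x::topological_space)
            \<longleftrightarrow> has_cont_eps_selections (ell1 :: ('a \<Rightarrow> real) set) TYPE('x)) \<and>
         (has_cont_eps_selections (ell1 :: ('a \<Rightarrow> real) set) TYPE('x)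
            \<longleftrightarrow> (\<forall>U :: 'a \<Rightarrow> 'x set. (\<forall>a. open (U a)) \<and> (\<Union>a. U a) = UNIV \<longrightarrow>
                   (\<exists>\<xi>. partition_of_unity \<xi> \<and> index_subordinated \<xi> U)))"
proof -
  have "has_cont_eps_selections (c00 :: ('a \<Rightarrow> real) set) TYPE('x) \<longleftrightarrow>
      (\<forall>U :: 'a \<Rightarrow> 'x set. (\<forall>a. open (U a)) \<and> (\<Union>a. U a) = UNIV \<longrightarrow>
        (\<exists>\<xi>. partition_of_unity \<xi> \<and> index_subordinated \<xi> U))"
    by (rule has_cont_eps_selections_iff_partitions_of_unity
        [OF assms order_refl c00_subset_ell1 convex_fun_set_c00])
  moreover have "has_cont_eps_selections (ell1 :: ('a \<Rightarrow> real) set) TYPE('x) \<longleftrightarrow>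
      (\<forall>U :: 'a \<Rightarrow> 'x set. (\<forall>a. open (U a)) \<and> (\<Union>a. U a) = UNIV \<longrightarrow>
        (\<exists>\<xi>. partition_of_unity \<xi> \<and> index_subordinated \<xi> U))"
    by (rule has_cont_eps_selections_iff_partitions_of_unity
        [OF assms c00_subset_ell1 order_refl convex_fun_set_ell1])
  ultimately show ?thesis by (simp only:)
qed

end
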